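(* Let $X_0=0$ and $X_n=\sum_{j=1}^{X_{n-1}}\xi_{n,j}+\varepsilon_n$ for $n\ge1$, where $\{\xi_{n,j},\varepsilon_n\}$ are independent nonnegative integer-valued random variables with $\xi_{n,j}$, $j\in\mathbb N$, identically distributed for each $n$. Let $G_n(x)=\mathbb E x^{\xi_{n,1}}$, $H_n(x)=\mathbb E x^{\varepsilon_n}$, $\rho_n=G_n'(1)$, and $m_{n,k}=H_n^{(k)}(1)$ (finite for $k=1,2$); assume $G_n^{(s)}(1)<\infty$ for all $s\ge1$ and $n$. Assume (i) $\rho_n<1$, $\lim_n\rho_n=1$, $\sum_{n=1}^\infty(1-\rho_n)=\infty$; (ii) $\lim_{n\to\infty}G_n''(1)/(1-\rho_n)=\nu\in(0,\infty)$; (iii) $\lim_{n\to\infty}G_n^{(s)}(1)/(1-\rho_n)=0$ for every $s\ge3$; (iv) $\lim_{n\to\infty}m_{n,1}/(1-\rho_n)=\lambda$ and $\lim_{n\to\infty}m_{n,2}/(1-\rho_n)=0$. Then $X_n$ converges in distribution to the negative binomial distribution $\mathrm{NB}(2\lambda/\nu,\ \nu/(2+\nu))$.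
   Context: For $r>0$, $p\in(0,1)$, $\mathrm{NB}(r,p)$ is the distribution on $\{0,1,2,\dots\}$ with $\mathbb P\{X=k\}=\binom{k+r-1}{r-1}(1-p)^rp^k$, where $\binom{k+r-1}{r-1}=\frac{(k+r-1)(k+r-2)\cdots r}{k!}$; its generating function is $\big(\frac{1-p}{1-px}\big)^r$. For $\lambda=0$ the distribution is understood as the point mass at $0$. *)

theory Defs
  imports "HOL-Probability.Probability"
begin

fun bp_X :: "(nat \<Rightarrow> nat \<Rightarrow> 'a \<Rightarrow> nat) \<Rightarrow> (nat \<Rightarrow> 'a \<Rightarrow> nat) \<Rightarrow> nat \<Rightarrow> 'a \<Rightarrow> nat" where
  "bp_X \<xi> \<epsilon> 0 \<omega> = 0"
| "bp_X \<xi> \<epsilon> (Suc n) \<omega> = (\<Sum>j = 1..bp_X \<xi> \<epsilon> n \<omega>. \<xi> (Suc n) j \<omega>) + \<epsilon> (Suc n) \<omega>"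

text \<open>For a nonnegative integer random variable Z with generating function F,
  the s-th (left) derivative F^(s)(1) equals E[Z(Z-1)...(Z-s+1)].\<close>
definition falling_fact :: "nat \<Rightarrow> nat \<Rightarrow> real" where
  "falling_fact s z = (\<Prod>i<s. real z - real i)"

text \<open>F^(s)(1) is finite iff the factorial moment is finite (integrable).\<close>
definition fact_moment_finite :: "'a measure \<Rightarrow> ('a \<Rightarrow> nat) \<Rightarrow> nat \<Rightarrow> bool" where
  "fact_moment_finite M Z s \<longleftrightarrow> integrable M (\<lambda>\<omega>. falling_fact s (Z \<omega>))"

definition fact_moment :: "'a measure \<Rightarrow> ('a \<Rightarrow> nat) \<Rightarrow> nat \<Rightarrow> real" where
  "fact_moment M Z s = (\<integral>\<omega>. falling_fact s (Z \<omega>) \<partial>M)"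

text \<open>Negative binomial probabilities NB(r,p):
  P{X=k} = binom(k+r-1, r-1) (1-p)^r p^k, with binom(k+r-1,r-1) = (r+k-1) gchoose k.
  For r = 0 this is the point mass at 0.\<close>
definition nb_prob :: "real \<Rightarrow> real \<Rightarrow> nat \<Rightarrow> real" where
  "nb_prob r p k = ((r + real k - 1) gchoose k) * (1 - p) powr r * p ^ k"

definition nb_measure :: "real \<Rightarrow> real \<Rightarrow> real measure" where
  "nb_measure r p = distr (density (count_space UNIV) (\<lambda>k::nat. ennreal (nb_prob r p k))) borel real"

end

theory Submission
  imports Defs
begin

text \<open>
  Let \<open>F\<^sub>n\<close>, \<open>G\<^sub>n\<close>, \<open>H\<^sub>n\<close> be the generating functions of \<open>X\<^sub>n\<close>, of the offspring and of the
  immigration law in generation \<open>n\<close>.  Conditioning on \<open>X\<^sub>n\<close> gives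
  \<open>F\<^sub>n\<^sub>+\<^sub>1(x) = F\<^sub>n(G\<^sub>n\<^sub>+\<^sub>1(x)) H\<^sub>n\<^sub>+\<^sub>1(x)\<close>, hence, with \<open>g\<^sub>k(u) = 1 - G\<^sub>k(1-u)\<close> and \<open>h\<^sub>k(v) = H\<^sub>k(1-v)\<close>,
  \<open>F\<^sub>n(1-u) = \<Prod>k=1..n. h\<^sub>k(g\<^sub>k\<^sub>+\<^sub>1 \<circ> \<dots> \<circ> g\<^sub>n (u))\<close>.
  The analytic core (locale \<open>pgf_iteration\<close>) only uses Taylor bounds of \<open>g\<^sub>k\<close> and \<open>h\<^sub>k\<close> at 0:
  \<open>g\<^sub>k\<close> is squeezed between fractional-linear maps \<open>v \<mapsto> \<rho>\<^sub>k v / (1 + \<beta> (1 - \<rho>\<^sub>k) v)\<close> with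
  \<open>\<beta>\<close> close to \<open>c = \<nu>/2\<close>; these compose in closed form, and a telescoping logarithmic sum shows
  that the product tends to \<open>(1 + c u) powr (- \<lambda> / c)\<close>, the generating function of
  \<open>NB(2\<lambda>/\<nu>, \<nu>/(2+\<nu>))\<close> at \<open>1-u\<close>.  Convergence of generating functions on \<open>[0,1)\<close> gives
  convergence of all point probabilities, which for laws on \<open>\<nat>\<close> is weak convergence.
\<close>

text \<open>Bonferroni-type bounds for \<open>1 - (1-u)^z\<close>, the probability of at least one success
  in \<open>z\<close> independent trials with success probability \<open>u\<close>.  Integrated against the law of a
  random variable they turn into Taylor bounds of a generating function at 1.\<close>

lemma one_minus_pow_Suc: "1 - (1-u)^(Suc z) = u + (1-u) * (1 - (1-u)^z)" for u :: real
  by (simp add: algebra_simps)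

lemma falling_fact_1 [simp]: "falling_fact 1 z = real z"
  by (simp add: falling_fact_def)

lemma falling_fact_Suc_0 [simp]: "falling_fact (Suc 0) z = real z"
  by (simp add: falling_fact_def)

lemma falling_fact_2 [simp]: "falling_fact 2 z = real z * (real z - 1)"
  by (simp add: falling_fact_def numeral_2_eq_2 lessThan_Suc)

lemma falling_fact_3 [simp]: "falling_fact 3 z = real z * (real z - 1) * (real z - 2)"
  by (simp add: falling_fact_def numeral_3_eq_3 numeral_2_eq_2 lessThan_Suc mult_ac)

lemma falling_fact_3_nonneg: "0 \<le> real z * (real z - 1) * (real z - 2)"
  by (cases "z \<le> 2") (auto simp: le_Suc_eq numeral_2_eq_2)

lemma one_minus_pow_bounds:
  fixes u :: real and z :: nat
  assumes "0 \<le> u" "u \<le> 1"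
  shows "0 \<le> 1 - (1-u)^z" and "1 - (1-u)^z \<le> falling_fact 1 z * u"
proof -
  show "0 \<le> 1 - (1-u)^z" using assms by (simp add: power_le_one)
  show "1 - (1-u)^z \<le> falling_fact 1 z * u"
  proof (induction z)
    case (Suc z)
    have "(1-u) * (1 - (1-u)^z) \<le> 1 - (1-u)^z"
      using assms by (intro mult_left_le_one_le) (auto simp: power_le_one)
    then show ?case using Suc unfolding one_minus_pow_Suc by (simp add: algebra_simps)
  qed simp
qed

lemma one_minus_pow_quadratic_lower:
  fixes u :: real and z :: nat
  assumes "0 \<le> u" "u \<le> 1"
  shows "falling_fact 1 z * u - falling_fact 2 z / 2 * u^2 \<le> 1 - (1-u)^z"
proof (induction z)
  case (Suc z)
  have "(1-u) * (real z * u - real z * (real z - 1) / 2 * u^2) \<le> (1-u) * (1 - (1-u)^z)"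
    using Suc assms by (intro mult_left_mono) auto
  moreover have "0 \<le> real z * (real z - 1) / 2 * u^3"
    using assms by (cases z) auto
  moreover have "u + (1-u) * (real z * u - real z * (real z - 1) / 2 * u^2)
      = real (Suc z) * u - real (Suc z) * (real (Suc z) - 1) / 2 * u^2
        + real z * (real z - 1) / 2 * u^3"
    by (simp add: field_simps power2_eq_square power3_eq_cube)
  ultimately show ?case unfolding one_minus_pow_Suc by simp
qed simp

lemma one_minus_pow_cubic_upper:
  fixes u :: real and z :: nat
  assumes "0 \<le> u" "u \<le> 1"
  shows "1 - (1-u)^z \<le> falling_fact 1 z * u - falling_fact 2 z / 2 * u^2 + falling_fact 3 z / 6 * u^3"
proof (induction z)
  case (Suc z)
  have "(1-u) * (1 - (1-u)^z) \<le> (1-u) * (real z * u - real z * (real z - 1) / 2 * u^2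
          + real z * (real z - 1) * (real z - 2) / 6 * u^3)"
    using Suc assms by (intro mult_left_mono) auto
  moreover have "0 \<le> real z * (real z - 1) * (real z - 2) / 6 * u^4"
    using assms falling_fact_3_nonneg[of z] by simp
  moreover have "u + (1-u) * (real z * u - real z * (real z - 1) / 2 * u^2
          + real z * (real z - 1) * (real z - 2) / 6 * u^3)
      = real (Suc z) * u - real (Suc z) * (real (Suc z) - 1) / 2 * u^2
        + real (Suc z) * (real (Suc z) - 1) * (real (Suc z) - 2) / 6 * u^3
        - real z * (real z - 1) * (real z - 2) / 6 * u^4"
    by (simp add: field_simps power2_eq_square power3_eq_cube power4_eq_xxxx)
  ultimately show ?case unfolding one_minus_pow_Suc by simp
qed simp

text \<open>Bounds on logarithmic increments, used to compare a sum with a telescoping sum of logs.\<close>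

lemma ln_diff_bounds:
  fixes y z :: real
  assumes "0 < y" "y \<le> z"
  shows "(z - y) / z \<le> ln z - ln y" "ln z - ln y \<le> (z - y) / y"
proof -
  have "ln (z / y) \<le> z / y - 1" using assms by (intro ln_le_minus_one) simp
  then show "ln z - ln y \<le> (z - y) / y" using assms by (simp add: ln_div diff_divide_distrib)
  have "ln (y / z) \<le> y / z - 1" using assms by (intro ln_le_minus_one) simp
  then show "(z - y) / z \<le> ln z - ln y" using assms by (simp add: ln_div diff_divide_distrib)
qed

lemma frac_lin_mono:
  fixes \<alpha> t s :: real
  assumes "0 \<le> \<alpha>" "0 \<le> t" "t \<le> s"
  shows "t / (1 + \<alpha> * t) \<le> s / (1 + \<alpha> * s)"
proof -
  have "0 < 1 + \<alpha> * t" "0 < 1 + \<alpha> * s" using assms by (auto intro: add_pos_nonneg)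
  moreover have "t * (1 + \<alpha> * s) \<le> s * (1 + \<alpha> * t)" using assms by (simp add: algebra_simps)
  ultimately show ?thesis by (simp add: divide_simps)
qed

lemma exp_le_one_minus:
  fixes t :: real
  assumes "0 \<le> t" "t \<le> 1/2"
  shows "exp (- t - 2 * t^2) \<le> 1 - t"
proof -
  have "- t - 2 * t^2 \<le> ln (1 - t)" by (rule ln_one_minus_pos_lower_bound) (use assms in auto)
  then have "exp (- t - 2 * t^2) \<le> exp (ln (1 - t))" by simp
  also have "\<dots> = 1 - t" using assms by simp
  finally show ?thesis .
qed

lemma prod_ge_1_minus_sum:
  fixes f t :: "'i \<Rightarrow> real"
  assumes "finite A" "\<And>k. k \<in> A \<Longrightarrow> 0 \<le> f k \<and> f k \<le> 1 \<and> 1 - t k \<le> f k \<and> 0 \<le> t k"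
  shows "1 - sum t A \<le> prod f A"
  using assms
proof (induction A rule: finite_induct)
  case (insert x F)
  have IH: "1 - sum t F \<le> prod f F" using insert by auto
  have p: "0 \<le> prod f F" "prod f F \<le> 1" using insert by (auto intro: prod_nonneg prod_le_1)
  have fx: "0 \<le> f x" "1 - t x \<le> f x" "0 \<le> t x" using insert by auto
  have "(1 - t x) * prod f F \<le> f x * prod f F" using fx p by (intro mult_right_mono) auto
  moreover have "t x * prod f F \<le> t x" using fx p by (simp add: mult_left_le)
  ultimately have "prod f F - t x \<le> f x * prod f F" by (simp add: algebra_simps)
  then show ?case using insert IH by simp
qed simp

lemma sum_shift_greaterThan: "(\<Sum>k\<in>{K<..n}. F k) = (\<Sum>j\<in>{K..<n}. F (Suc j))" for F :: "nat \<Rightarrow> real"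
proof -
  have "{K<..n} = {Suc K..<Suc n}" by auto
  then show ?thesis by (simp only: sum.shift_bounds_Suc_ivl)
qed

lemma partial_sums_at_top:
  fixes f :: "nat \<Rightarrow> real"
  assumes nonneg: "\<And>k. 0 \<le> f k" and diverges: "\<not> summable f"
  shows "filterlim (\<lambda>n. \<Sum>i<n. f i) at_top sequentially"
  unfolding filterlim_at_top
proof
  fix B
  have "\<exists>N. B < (\<Sum>i<N. f i)"
  proof (rule ccontr)
    assume "\<not> ?thesis"
    then have "summable f" using nonneg by (intro summableI_nonneg_bounded[where x=B]) (auto simp: not_less)
    with diverges show False by simp
  qed
  then obtain N where N: "B < (\<Sum>i<N. f i)" by blast
  have "B \<le> (\<Sum>i<n. f i)" if "N \<le> n" for n
  proof -
    have "(\<Sum>i<N. f i) \<le> (\<Sum>i<n. f i)" using that nonneg by (intro sum_mono2) auto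
    with N show ?thesis by simp
  qed
  then show "eventually (\<lambda>n. B \<le> (\<Sum>i<n. f i)) sequentially"
    unfolding eventually_sequentially by blast
qed

lemma tendsto_squeeze_param:
  fixes f :: "nat \<Rightarrow> real" and Up Lo :: "real \<Rightarrow> real"
  assumes Up: "(Up \<longlongrightarrow> L) (at_right 0)" and Lo: "(Lo \<longlongrightarrow> L) (at_right 0)" and "0 < \<delta>\<^sub>0"
    and trap: "\<And>\<delta>. 0 < \<delta> \<Longrightarrow> \<delta> < \<delta>\<^sub>0 \<Longrightarrow> \<exists>U' L'. U' \<longlonglongrightarrow> Up \<delta> \<and> L' \<longlonglongrightarrow> Lo \<delta>
                  \<and> eventually (\<lambda>n. L' n \<le> f n \<and> f n \<le> U' n) sequentially"
  shows "f \<longlonglongrightarrow> L"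
  unfolding tendsto_iff
proof (intro allI impI)
  fix r :: real assume r: "0 < r"
  have "eventually (\<lambda>\<delta>. dist (Up \<delta>) L < r/2 \<and> dist (Lo \<delta>) L < r/2 \<and> \<delta> < \<delta>\<^sub>0) (at_right 0)"
    using tendsto_iff[THEN iffD1, OF Up, rule_format, of "r/2"]
      tendsto_iff[THEN iffD1, OF Lo, rule_format, of "r/2"] r \<open>0 < \<delta>\<^sub>0\<close>
    by (intro eventually_conj) (auto simp: eventually_at_right_field)
  then obtain \<delta> where \<delta>: "0 < \<delta>" "\<delta> < \<delta>\<^sub>0" "dist (Up \<delta>) L < r/2" "dist (Lo \<delta>) L < r/2"
    unfolding eventually_at_right_field by (metis field_lbound_gt_zero)
  obtain U' L' where U': "U' \<longlonglongrightarrow> Up \<delta>" and L': "L' \<longlonglongrightarrow> Lo \<delta>"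
    and between: "eventually (\<lambda>n. L' n \<le> f n \<and> f n \<le> U' n) sequentially"
    using trap[OF \<delta>(1,2)] by blast
  have "eventually (\<lambda>n. dist (U' n) (Up \<delta>) < r/2 \<and> dist (L' n) (Lo \<delta>) < r/2) sequentially"
    using tendsto_iff[THEN iffD1, OF U', rule_format, of "r/2"]
      tendsto_iff[THEN iffD1, OF L', rule_format, of "r/2"] r by (intro eventually_conj) auto
  with between show "eventually (\<lambda>n. dist (f n) L < r) sequentially"
    by eventually_elim (use \<delta>(3,4) in \<open>simp only: dist_real_def; arith\<close>)
qed

text \<open>\<open>bcomp g k n u = g\<^sub>k\<^sub>+\<^sub>1 (g\<^sub>k\<^sub>+\<^sub>2 (\<dots> (g\<^sub>n u)))\<close> for \<open>k < n\<close>, and \<open>u\<close> for \<open>n \<le> k\<close>.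
  The generating function of \<open>X\<^sub>n\<close> is a product of such compositions.\<close>

fun bcomp :: "(nat \<Rightarrow> real \<Rightarrow> real) \<Rightarrow> nat \<Rightarrow> nat \<Rightarrow> real \<Rightarrow> real" where
  "bcomp g k 0 u = u"
| "bcomp g k (Suc n) u = (if Suc n \<le> k then u else bcomp g k n (g (Suc n) u))"

lemma bcomp_self: "n \<le> k \<Longrightarrow> bcomp g k n u = u"
  by (induction n arbitrary: u) auto

lemma bcomp_step: "k < n \<Longrightarrow> bcomp g k n u = g (Suc k) (bcomp g (Suc k) n u)"
proof (induction n arbitrary: u)
  case (Suc n)
  then show ?case by (cases "k = n") (auto simp: bcomp_self)
qed simp

subsection \<open>A near-critical iteration of generating functions\<close>

text \<open>Think of \<open>g k u = 1 - G\<^sub>k(1-u)\<close> and \<open>h k v = H\<^sub>k(1-v)\<close>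
  for the offspring and immigration generating functions \<open>G\<^sub>k\<close>, \<open>H\<^sub>k\<close>; then \<open>\<rho> k\<close>, \<open>a k\<close>, \<open>b k\<close>
  are \<open>G\<^sub>k'(1)\<close>, \<open>G\<^sub>k''(1)/2\<close>, \<open>G\<^sub>k'''(1)/6\<close> and \<open>m k\<close>, \<open>q k\<close> are \<open>H\<^sub>k'(1)\<close>, \<open>H\<^sub>k''(1)/2\<close>.\<close>

locale pgf_iteration =
  fixes \<rho> a b m q :: "nat \<Rightarrow> real" and g h :: "nat \<Rightarrow> real \<Rightarrow> real" and c lam :: real
  assumes rho_nonneg: "\<And>k. k \<ge> 1 \<Longrightarrow> 0 \<le> \<rho> k"
    and rho_less_1: "\<And>k. k \<ge> 1 \<Longrightarrow> \<rho> k < 1"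
    and b_nonneg: "\<And>k. k \<ge> 1 \<Longrightarrow> 0 \<le> b k"
    and m_nonneg: "\<And>k. k \<ge> 1 \<Longrightarrow> 0 \<le> m k"
    and g_nonneg: "\<And>k u. k \<ge> 1 \<Longrightarrow> 0 \<le> u \<Longrightarrow> u \<le> 1 \<Longrightarrow> 0 \<le> g k u"
    and g_linear_upper: "\<And>k u. k \<ge> 1 \<Longrightarrow> 0 \<le> u \<Longrightarrow> u \<le> 1 \<Longrightarrow> g k u \<le> \<rho> k * u"
    and g_lower: "\<And>k u. k \<ge> 1 \<Longrightarrow> 0 \<le> u \<Longrightarrow> u \<le> 1 \<Longrightarrow> \<rho> k * u - a k * u^2 \<le> g k u"
    and g_upper: "\<And>k u. k \<ge> 1 \<Longrightarrow> 0 \<le> u \<Longrightarrow> u \<le> 1 \<Longrightarrow> g k u \<le> \<rho> k * u - a k * u^2 + b k * u^3"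
    and h_nonneg: "\<And>k v. k \<ge> 1 \<Longrightarrow> 0 \<le> v \<Longrightarrow> v \<le> 1 \<Longrightarrow> 0 \<le> h k v"
    and h_le_1: "\<And>k v. k \<ge> 1 \<Longrightarrow> 0 \<le> v \<Longrightarrow> v \<le> 1 \<Longrightarrow> h k v \<le> 1"
    and h_lower: "\<And>k v. k \<ge> 1 \<Longrightarrow> 0 \<le> v \<Longrightarrow> v \<le> 1 \<Longrightarrow> 1 - m k * v \<le> h k v"
    and h_upper: "\<And>k v. k \<ge> 1 \<Longrightarrow> 0 \<le> v \<Longrightarrow> v \<le> 1 \<Longrightarrow> h k v \<le> 1 - m k * v + q k * v^2"
    and lim_a: "(\<lambda>k. a k / (1 - \<rho> k)) \<longlonglongrightarrow> c"
    and lim_b: "(\<lambda>k. b k / (1 - \<rho> k)) \<longlonglongrightarrow> 0"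
    and lim_m: "(\<lambda>k. m k / (1 - \<rho> k)) \<longlonglongrightarrow> lam"
    and lim_q: "(\<lambda>k. q k / (1 - \<rho> k)) \<longlonglongrightarrow> 0"
    and lim_rho: "\<rho> \<longlonglongrightarrow> 1"
    and gap_not_summable: "\<not> summable (\<lambda>k. 1 - \<rho> k)"
    and c_pos: "0 < c" and lam_nonneg: "0 \<le> lam"
begin

definition gap :: "nat \<Rightarrow> real" where "gap k = 1 - \<rho> k"

definition rprod :: "nat \<Rightarrow> nat \<Rightarrow> real" where "rprod K n = (\<Prod>i\<in>{K<..n}. \<rho> i)"

lemma gap_pos: "k \<ge> 1 \<Longrightarrow> 0 < gap k"
  using rho_less_1[of k] by (simp add: gap_def)

lemma bcomp_range: "0 \<le> u \<Longrightarrow> u \<le> 1 \<Longrightarrow> 0 \<le> bcomp g k n u \<and> bcomp g k n u \<le> u"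
proof (induction n arbitrary: u)
  case (Suc n)
  have "g (Suc n) u \<le> \<rho> (Suc n) * u" using g_linear_upper Suc.prems by simp
  also have "\<dots> \<le> u" using rho_nonneg[of "Suc n"] rho_less_1[of "Suc n"] Suc.prems
    by (intro mult_left_le_one_le) auto
  finally show ?case using Suc.IH[of "g (Suc n) u"] g_nonneg[of "Suc n" u] Suc.prems by auto
qed simp

text \<open>The compositions increase in the starting index: fewer factors \<open>g\<^sub>j \<le> id\<close> are applied.\<close>

lemma bcomp_mono:
  assumes "0 \<le> u" "u \<le> 1" "j \<le> k" "k \<le> n"
  shows "bcomp g j n u \<le> bcomp g k n u"
  using assms(3,4)
proof (induction k rule: dec_induct)
  case (step k)
  define v where "v = bcomp g (Suc k) n u"
  have v: "0 \<le> v" "v \<le> 1" using bcomp_range[of u "Suc k" n] assms by (auto simp: v_def)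
  have "bcomp g k n u = g (Suc k) v" using step by (simp add: bcomp_step v_def)
  also have "\<dots> \<le> \<rho> (Suc k) * v" using g_linear_upper v by simp
  also have "\<dots> \<le> v" using rho_nonneg[of "Suc k"] rho_less_1[of "Suc k"] v
    by (intro mult_left_le_one_le) auto
  finally show ?case using step by (simp add: v_def)
qed simp

lemma rprod_nonneg: "0 \<le> rprod k n"
  unfolding rprod_def by (intro prod_nonneg) (auto intro: rho_nonneg)

lemma rprod_le_1: "rprod k n \<le> 1"
  unfolding rprod_def by (intro prod_le_1) (auto intro: rho_nonneg less_imp_le[OF rho_less_1])

lemma rprod_self: "rprod n n = 1"
  by (simp add: rprod_def)

lemma rprod_step: "k < n \<Longrightarrow> rprod k n = \<rho> (Suc k) * rprod (Suc k) n"
proof -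
  assume "k < n"
  then have "{k<..n} = insert (Suc k) {Suc k<..n}" by auto
  then show ?thesis unfolding rprod_def by simp
qed

lemma rprod_tendsto_0: "(\<lambda>n. rprod K n) \<longlonglongrightarrow> 0"
proof -
  define S where "S n = (\<Sum>i<n. gap (Suc i))" for n
  have "filterlim S at_top sequentially"
    unfolding S_def using gap_pos gap_not_summable summable_Suc_iff[of "\<lambda>k. 1 - \<rho> k"]
    by (intro partial_sums_at_top) (auto simp: gap_def less_imp_le)
  then have "filterlim (\<lambda>n. - S n) at_bot sequentially" by (simp add: filterlim_uminus_at_bot)
  then have "(\<lambda>n. exp (- S n)) \<longlonglongrightarrow> 0" by (rule filterlim_compose[OF exp_at_bot])
  then have lim: "(\<lambda>n. exp (S K) * exp (- S n)) \<longlonglongrightarrow> 0"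
    using tendsto_mult_left[of "\<lambda>n. exp (- S n)" 0 sequentially "exp (S K)"] by simp
  have lower: "eventually (\<lambda>n. 0 \<le> rprod K n) sequentially" by (simp add: rprod_nonneg)
  have upper: "eventually (\<lambda>n. rprod K n \<le> exp (S K) * exp (- S n)) sequentially"
    using eventually_ge_at_top[of K]
  proof eventually_elim
    case (elim n)
    have "rprod K n \<le> (\<Prod>i\<in>{K<..n}. exp (- gap i))"
      unfolding rprod_def
    proof (intro prod_mono conjI)
      fix i assume "i \<in> {K<..n}"
      then show "0 \<le> \<rho> i" by (auto intro: rho_nonneg)
      show "\<rho> i \<le> exp (- gap i)" using exp_ge_add_one_self[of "- gap i"] by (simp add: gap_def)
    qed
    also have "\<dots> = exp (- (\<Sum>i\<in>{K<..n}. gap i))" by (simp add: exp_sum sum_negf[symmetric])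
    also have "(\<Sum>i\<in>{K<..n}. gap i) = S n - S K"
    proof -
      have "S n = S K + (\<Sum>i\<in>{K..<n}. gap (Suc i))"
        unfolding S_def lessThan_atLeast0 using elim by (simp add: sum.atLeastLessThan_concat)
      then show ?thesis by (simp add: sum_shift_greaterThan)
    qed
    also have "exp (- (S n - S K)) = exp (S K) * exp (- S n)" by (simp flip: exp_add)
    finally show ?case .
  qed
  show ?thesis by (rule tendsto_sandwich[OF lower upper tendsto_const lim])
qed


text \<open>For \<open>\<beta> \<ge> 0\<close> the fractional-linear maps
  \<open>v \<mapsto> \<rho>\<^sub>k v / (1 + \<beta> (1 - \<rho>\<^sub>k) v)\<close> compose in closed form: started from \<open>u\<close> at time \<open>n\<close> they
  reach \<open>flin \<beta> u k n\<close> at time \<open>k\<close>.  The maps \<open>g\<^sub>k\<close> are squeezed between two such maps.\<close>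

definition flin :: "real \<Rightarrow> real \<Rightarrow> nat \<Rightarrow> nat \<Rightarrow> real" where
  "flin \<beta> u k n = u * rprod k n / (1 + \<beta> * u * (1 - rprod k n))"

lemma flin_denom_ge_1: "0 \<le> \<beta> \<Longrightarrow> 0 \<le> u \<Longrightarrow> 1 \<le> 1 + \<beta> * u * (1 - rprod k n)"
  using rprod_le_1[of k n] by simp

lemma flin_nonneg: "0 \<le> \<beta> \<Longrightarrow> 0 \<le> u \<Longrightarrow> 0 \<le> flin \<beta> u k n"
  unfolding flin_def using flin_denom_ge_1[of \<beta> u k n] rprod_nonneg[of k n] by simp

lemma flin_le:
  assumes "0 \<le> \<beta>" "0 \<le> u"
  shows "flin \<beta> u k n \<le> u * rprod k n"
proof -
  have "u * rprod k n / (1 + \<beta> * u * (1 - rprod k n)) \<le> u * rprod k n / 1"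
    using flin_denom_ge_1[of \<beta> u k n] rprod_nonneg[of k n] assms by (intro divide_left_mono) auto
  then show ?thesis by (simp add: flin_def)
qed

lemma flin_self: "flin \<beta> u n n = u"
  by (simp add: flin_def rprod_self)

lemma flin_step:
  assumes "0 \<le> \<beta>" "0 \<le> u" "k < n"
  shows "flin \<beta> u k n = \<rho> (Suc k) * (flin \<beta> u (Suc k) n / (1 + \<beta> * gap (Suc k) * flin \<beta> u (Suc k) n))"
proof -
  define p where "p = rprod (Suc k) n"
  define r where "r = \<rho> (Suc k)"
  define D where "D = 1 + \<beta> * u * (1 - p)"
  have "0 \<le> r" using rho_nonneg[of "Suc k"] by (simp add: r_def)
  have "0 \<le> p" using rprod_nonneg by (simp add: p_def)
  have D: "0 < D" using flin_denom_ge_1[of \<beta> u "Suc k" n] assms by (simp add: D_def p_def)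
  have D': "0 < D + \<beta> * (1 - r) * (u * p)"
    using D assms \<open>0 \<le> p\<close> rho_less_1[of "Suc k"] by (intro add_pos_nonneg) (auto simp: r_def)
  have "\<rho> (Suc k) * (flin \<beta> u (Suc k) n / (1 + \<beta> * gap (Suc k) * flin \<beta> u (Suc k) n))
      = r * ((u * p / D) / (1 + \<beta> * (1 - r) * (u * p / D)))"
    by (simp add: flin_def gap_def r_def p_def D_def)
  also have "\<dots> = r * u * p / (D + \<beta> * (1 - r) * (u * p))"
    using D D' by (simp add: field_simps)
  also have "\<dots> = flin \<beta> u k n"
    using rprod_step[OF assms(3)] by (simp add: flin_def D_def p_def r_def algebra_simps)
  finally show ?thesis by simp
qed

lemma bcomp_le_flin:
  assumes "0 \<le> \<beta>" "0 \<le> u" "u \<le> 1" "K \<le> k" "k \<le> n"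
    and below: "\<And>k v. K < k \<Longrightarrow> k \<le> n \<Longrightarrow> 0 \<le> v \<Longrightarrow> v \<le> 1 \<Longrightarrow>
                  g k v \<le> \<rho> k * (v / (1 + \<beta> * gap k * v))"
  shows "bcomp g k n u \<le> flin \<beta> u k n"
  using assms(5,4)
proof (induction k rule: inc_induct)
  case (step j)
  define v where "v = bcomp g (Suc j) n u"
  have v: "0 \<le> v" "v \<le> 1" using bcomp_range[of u "Suc j" n] assms by (auto simp: v_def)
  have "bcomp g j n u = g (Suc j) v" using step by (simp add: bcomp_step v_def)
  also have "\<dots> \<le> \<rho> (Suc j) * (v / (1 + \<beta> * gap (Suc j) * v))"
    using below[of "Suc j" v] v step by auto
  also have "\<dots> \<le> \<rho> (Suc j) * (flin \<beta> u (Suc j) n / (1 + \<beta> * gap (Suc j) * flin \<beta> u (Suc j) n))"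
    using step v assms rho_nonneg[of "Suc j"] gap_pos[of "Suc j"]
    by (intro mult_left_mono frac_lin_mono[of "\<beta> * gap (Suc j)"]) (auto simp: v_def)
  also have "\<dots> = flin \<beta> u j n" using flin_step[of \<beta> u j n] step assms by simp
  finally show ?case .
qed (simp add: bcomp_self flin_self)

lemma flin_le_bcomp:
  assumes "0 \<le> \<beta>" "0 \<le> u" "u \<le> 1" "K \<le> k" "k \<le> n"
    and above: "\<And>k v. K < k \<Longrightarrow> k \<le> n \<Longrightarrow> 0 \<le> v \<Longrightarrow> v \<le> 1 \<Longrightarrow>
                  \<rho> k * (v / (1 + \<beta> * gap k * v)) \<le> g k v"
  shows "flin \<beta> u k n \<le> bcomp g k n u"
  using assms(5,4)
proof (induction k rule: inc_induct)
  case (step j)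
  define v where "v = bcomp g (Suc j) n u"
  have v: "0 \<le> v" "v \<le> 1" using bcomp_range[of u "Suc j" n] assms by (auto simp: v_def)
  have "flin \<beta> u j n = \<rho> (Suc j) * (flin \<beta> u (Suc j) n / (1 + \<beta> * gap (Suc j) * flin \<beta> u (Suc j) n))"
    using flin_step[of \<beta> u j n] step assms by simp
  also have "\<dots> \<le> \<rho> (Suc j) * (v / (1 + \<beta> * gap (Suc j) * v))"
    using step v assms rho_nonneg[of "Suc j"] gap_pos[of "Suc j"] flin_nonneg[of \<beta> u "Suc j" n]
    by (intro mult_left_mono frac_lin_mono[of "\<beta> * gap (Suc j)"]) (auto simp: v_def)
  also have "\<dots> \<le> g (Suc j) v" using above[of "Suc j" v] v step by auto
  also have "\<dots> = bcomp g j n u" using step by (simp add: bcomp_step v_def)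
  finally show ?case .
qed (simp add: bcomp_self flin_self)

lemma g_le_frac_lin:
  assumes "k \<ge> 1" "0 \<le> \<beta>" "\<beta> * gap k \<le> a k - b k" "0 \<le> v" "v \<le> 1"
  shows "g k v \<le> \<rho> k * (v / (1 + \<beta> * gap k * v))"
proof -
  define t where "t = \<beta> * gap k * v"
  have r: "0 \<le> \<rho> k" "\<rho> k \<le> 1" using rho_nonneg rho_less_1 assms by (auto simp: less_imp_le)
  have t: "0 \<le> t" using assms gap_pos[of k] by (simp add: t_def)
  have "b k * v^3 \<le> b k * v^2"
    using b_nonneg[OF assms(1)] assms by (intro mult_left_mono) (auto simp: power_decreasing)
  then have "g k v \<le> \<rho> k * v - (a k - b k) * v^2"
    using g_upper[of k v] assms by (simp add: algebra_simps)
  also have "\<dots> \<le> \<rho> k * v - \<beta> * gap k * v^2"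
    using assms by (intro diff_left_mono mult_right_mono) auto
  also have "\<dots> \<le> \<rho> k * v - \<rho> k * (\<beta> * gap k * v^2)"
    using r assms gap_pos[of k] by (intro diff_left_mono mult_left_le_one_le) auto
  also have "\<dots> = \<rho> k * v * (1 - t)" by (simp add: t_def power2_eq_square algebra_simps)
  also have "\<dots> \<le> \<rho> k * v / (1 + t)"
  proof -
    have "\<rho> k * v * (1 - t) * (1 + t) \<le> \<rho> k * v"
      using r assms t by (simp add: algebra_simps)
    then show ?thesis using t by (simp add: divide_simps)
  qed
  finally show ?thesis by (simp add: t_def)
qed

lemma frac_lin_le_g:
  assumes "k \<ge> 1" "0 \<le> \<beta>" "a k \<le> \<rho> k * \<beta> * gap k * (1 - \<beta> * gap k)" "0 \<le> v" "v \<le> 1"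
  shows "\<rho> k * (v / (1 + \<beta> * gap k * v)) \<le> g k v"
proof -
  define t where "t = \<beta> * gap k * v"
  have r: "0 \<le> \<rho> k" using rho_nonneg assms by simp
  have t: "0 \<le> t" using assms gap_pos[of k] by (simp add: t_def)
  have "\<rho> k * (v / (1 + t)) \<le> \<rho> k * v * (1 - t + t^2)"
  proof -
    have "1 \<le> (1 - t + t^2) * (1 + t)"
      using t by (simp add: algebra_simps power2_eq_square power3_eq_cube[symmetric])
    then have "\<rho> k * v \<le> \<rho> k * v * (1 - t + t^2) * (1 + t)"
      using r assms mult_left_mono[of 1 "(1 - t + t^2) * (1 + t)" "\<rho> k * v"] by (simp add: mult.assoc)
    then show ?thesis using t by (simp add: divide_simps)
  qed
  also have "\<dots> = \<rho> k * v - \<rho> k * \<beta> * gap k * v^2 + \<rho> k * (\<beta> * gap k)^2 * v^3"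
    by (simp add: t_def power2_eq_square power3_eq_cube algebra_simps)
  also have "\<dots> \<le> \<rho> k * v - \<rho> k * \<beta> * gap k * v^2 + \<rho> k * (\<beta> * gap k)^2 * v^2"
    using assms r by (intro add_left_mono mult_left_mono) (auto simp: power_decreasing)
  also have "\<dots> = \<rho> k * v - (\<rho> k * \<beta> * gap k * (1 - \<beta> * gap k)) * v^2"
    by (simp add: power2_eq_square algebra_simps)
  also have "\<dots> \<le> \<rho> k * v - a k * v^2"
    using assms by (intro diff_left_mono mult_right_mono) auto
  also have "\<dots> \<le> g k v" using g_lower assms by simp
  finally show ?thesis by (simp add: t_def)
qed

text \<open>The weighted sums \<open>\<Sum> (1 - \<rho>\<^sub>k) flin \<beta> u k n\<close> are comparable to the telescoping sum of
  the logarithms \<open>flin_log \<beta> u k n\<close>; in the limit they equal \<open>ln (1 + \<beta> u) / \<beta>\<close>.\<close>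

definition flin_log :: "real \<Rightarrow> real \<Rightarrow> nat \<Rightarrow> nat \<Rightarrow> real" where
  "flin_log \<beta> u k n = ln (1 + \<beta> * u * (1 - rprod k n))"

lemma flin_log_step:
  assumes "0 < \<beta>" "0 \<le> u" "u \<le> 1" "j < n"
  defines "\<Delta> \<equiv> flin_log \<beta> u j n - flin_log \<beta> u (Suc j) n"
  shows "0 \<le> \<Delta>" "\<Delta> / \<beta> \<le> gap (Suc j) * flin \<beta> u (Suc j) n"
    "gap (Suc j) * flin \<beta> u (Suc j) n \<le> (1 + \<beta> * gap (Suc j)) / \<beta> * \<Delta>"
proof -
  define p where "p = rprod (Suc j) n"
  define r where "r = \<rho> (Suc j)"
  have r: "0 \<le> r" "r \<le> 1" using rho_nonneg[of "Suc j"] rho_less_1[of "Suc j"] by (auto simp: r_def)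
  have p: "0 \<le> p" "p \<le> 1" using rprod_nonneg rprod_le_1 by (auto simp: p_def)
  define y where "y = 1 + \<beta> * u * (1 - p)"
  define z where "z = 1 + \<beta> * u * (1 - r * p)"
  have y1: "1 \<le> y" using assms p by (simp add: y_def)
  have zy: "z - y = \<beta> * u * p * (1 - r)" by (simp add: y_def z_def algebra_simps)
  have yz: "y \<le> z" using zy assms p r by (smt (verit) mult_nonneg_nonneg)
  have \<Delta>: "\<Delta> = ln z - ln y"
    using rprod_step[OF assms(4)] by (simp add: \<Delta>_def flin_log_def y_def z_def p_def r_def)
  have "gap (Suc j) * flin \<beta> u (Suc j) n = (1 - r) * (u * p / y)"
    by (simp add: flin_def gap_def r_def p_def y_def)
  also have "\<dots> = (z - y) / (\<beta> * y)" using assms y1 unfolding zy by (simp add: field_simps)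
  finally have EU: "gap (Suc j) * flin \<beta> u (Suc j) n = (z - y) / (\<beta> * y)" .
  note lb = ln_diff_bounds[of y z]
  show "0 \<le> \<Delta>" unfolding \<Delta> using y1 yz by simp
  show "\<Delta> / \<beta> \<le> gap (Suc j) * flin \<beta> u (Suc j) n"
    unfolding \<Delta> EU using lb(2) y1 yz assms by (simp add: divide_simps mult.commute)
  have "z / y \<le> 1 + \<beta> * gap (Suc j)"
  proof -
    have "z / y = 1 + (z - y) / y" using y1 by (simp add: field_simps)
    also have "\<dots> \<le> 1 + (z - y)" using y1 yz by (simp add: divide_le_eq mult_le_cancel_left1)
    also have "\<dots> \<le> 1 + \<beta> * gap (Suc j)"
    proof -
      have "u * p * (1 - r) \<le> 1 * 1 * (1 - r)" using assms p r by (intro mult_mono) auto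
      then show ?thesis unfolding zy using assms by (simp add: gap_def r_def mult.assoc)
    qed
    finally show ?thesis .
  qed
  have "(z - y) / (\<beta> * y) = (z / y) * ((z - y) / z) / \<beta>" using y1 yz assms by (simp add: field_simps)
  also have "\<dots> \<le> (z / y) * (ln z - ln y) / \<beta>"
    using lb(1) y1 yz assms by (intro divide_right_mono mult_left_mono) auto
  also have "\<dots> \<le> (1 + \<beta> * gap (Suc j)) * (ln z - ln y) / \<beta>"
    using \<open>z / y \<le> 1 + \<beta> * gap (Suc j)\<close> y1 yz assms
    by (intro divide_right_mono mult_right_mono) auto
  finally show "gap (Suc j) * flin \<beta> u (Suc j) n \<le> (1 + \<beta> * gap (Suc j)) / \<beta> * \<Delta>"
    unfolding \<Delta> EU by simp
qed

lemma flin_log_telescope: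
  "K \<le> n \<Longrightarrow> (\<Sum>j\<in>{K..<n}. flin_log \<beta> u j n - flin_log \<beta> u (Suc j) n) = flin_log \<beta> u K n"
  using sum_Suc_diff'[of K n "\<lambda>j. - flin_log \<beta> u j n"] by (simp add: flin_log_def rprod_self)

lemma sum_flin_lower:
  assumes "0 < \<beta>" "0 \<le> u" "u \<le> 1" "K \<le> n"
  shows "ln (1 + \<beta> * u * (1 - rprod K n)) / \<beta> \<le> (\<Sum>k\<in>{K<..n}. gap k * flin \<beta> u k n)"
proof -
  have "ln (1 + \<beta> * u * (1 - rprod K n)) / \<beta>
      = (\<Sum>j\<in>{K..<n}. (flin_log \<beta> u j n - flin_log \<beta> u (Suc j) n) / \<beta>)"
    using flin_log_telescope[OF assms(4), of \<beta> u] by (simp add: flin_log_def sum_divide_distrib[symmetric])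
  also have "\<dots> \<le> (\<Sum>j\<in>{K..<n}. gap (Suc j) * flin \<beta> u (Suc j) n)"
    using flin_log_step(2) assms by (intro sum_mono) auto
  finally show ?thesis by (simp add: sum_shift_greaterThan)
qed

lemma sum_flin_upper:
  assumes "0 < \<beta>" "0 \<le> u" "u \<le> 1" "K \<le> n" "0 \<le> \<delta>"
    and small_gap: "\<And>k. K < k \<Longrightarrow> k \<le> n \<Longrightarrow> gap k \<le> \<delta>"
  shows "(\<Sum>k\<in>{K<..n}. gap k * flin \<beta> u k n) \<le> (1 + \<beta> * \<delta>) / \<beta> * ln (1 + \<beta> * u)"
proof -
  have "(\<Sum>k\<in>{K<..n}. gap k * flin \<beta> u k n)
      \<le> (\<Sum>j\<in>{K..<n}. (1 + \<beta> * \<delta>) / \<beta> * (flin_log \<beta> u j n - flin_log \<beta> u (Suc j) n))"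
    unfolding sum_shift_greaterThan
  proof (intro sum_mono)
    fix j assume j: "j \<in> {K..<n}"
    have "gap (Suc j) * flin \<beta> u (Suc j) n
        \<le> (1 + \<beta> * gap (Suc j)) / \<beta> * (flin_log \<beta> u j n - flin_log \<beta> u (Suc j) n)"
      using flin_log_step(3)[of \<beta> u j n] assms j by auto
    also have "\<dots> \<le> (1 + \<beta> * \<delta>) / \<beta> * (flin_log \<beta> u j n - flin_log \<beta> u (Suc j) n)"
      using flin_log_step(1)[of \<beta> u j n] assms j small_gap[of "Suc j"]
      by (intro mult_right_mono divide_right_mono) auto
    finally show "gap (Suc j) * flin \<beta> u (Suc j) n
        \<le> (1 + \<beta> * \<delta>) / \<beta> * (flin_log \<beta> u j n - flin_log \<beta> u (Suc j) n)" .
  qed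
  also have "\<dots> = (1 + \<beta> * \<delta>) / \<beta> * flin_log \<beta> u K n"
    unfolding sum_distrib_left[symmetric] using flin_log_telescope[OF assms(4)] by simp
  also have "\<dots> \<le> (1 + \<beta> * \<delta>) / \<beta> * ln (1 + \<beta> * u)"
  proof -
    have "flin_log \<beta> u K n \<le> ln (1 + \<beta> * u)" unfolding flin_log_def
      using assms rprod_nonneg[of K n] rprod_le_1[of K n]
      by (subst ln_le_cancel_iff) (auto intro: add_pos_nonneg simp: mult_right_le_one_le)
    then show ?thesis using assms by (intro mult_left_mono) auto
  qed
  finally show ?thesis .
qed


lemma eventually_le_gap:
  assumes "(\<lambda>k. x k / (1 - \<rho> k)) \<longlonglongrightarrow> l" "y \<longlonglongrightarrow> l'" "l < l'"
  shows "eventually (\<lambda>k. x k \<le> y k * gap k) sequentially"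
proof -
  have "eventually (\<lambda>k. 0 < y k - x k / gap k) sequentially"
    using assms by (intro order_tendstoD(1)[of _ "l' - l"] tendsto_diff) (auto simp: gap_def)
  with eventually_ge_at_top[of 1] show ?thesis
    by eventually_elim (use gap_pos in \<open>auto simp: pos_divide_less_eq\<close>)
qed

lemma eventually_ge_gap:
  assumes "(\<lambda>k. x k / (1 - \<rho> k)) \<longlonglongrightarrow> l" "y \<longlonglongrightarrow> l'" "l' < l"
  shows "eventually (\<lambda>k. y k * gap k \<le> x k) sequentially"
proof -
  have "eventually (\<lambda>k. 0 < x k / gap k - y k) sequentially"
    using assms by (intro order_tendstoD(1)[of _ "l - l'"] tendsto_diff) (auto simp: gap_def)
  with eventually_ge_at_top[of 1] show ?thesis
    by eventually_elim (use gap_pos in \<open>auto simp: pos_less_divide_eq\<close>)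
qed

text \<open>The index \<open>k\<close> is \<open>\<delta>\<close>-regular if the coefficients at \<open>k\<close> are within \<open>\<delta>\<close> of their
  asymptotic values in the scale of \<open>1 - \<rho>\<^sub>k\<close>, in the form needed by the comparison lemmas.\<close>

definition regular :: "real \<Rightarrow> nat \<Rightarrow> bool" where
  "regular \<delta> k \<longleftrightarrow> gap k \<le> \<delta> \<and> (lam + \<delta>) * gap k \<le> 1/2
     \<and> (c - \<delta>) * gap k \<le> a k - b k \<and> a k \<le> \<rho> k * (c + \<delta>) * gap k * (1 - (c + \<delta>) * gap k)
     \<and> (lam - \<delta>) * gap k \<le> m k \<and> m k \<le> (lam + \<delta>) * gap k \<and> q k \<le> \<delta> * gap k"

lemma eventually_regular:
  assumes "0 < \<delta>" "\<delta> < c"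
  obtains K where "1 \<le> K" "\<And>k. K < k \<Longrightarrow> regular \<delta> k"
proof -
  have gap_0: "gap \<longlonglongrightarrow> 0"
    using tendsto_diff[OF tendsto_const[of 1] lim_rho] by (simp add: gap_def[abs_def])
  have lim_ab: "(\<lambda>k. (a k - b k) / (1 - \<rho> k)) \<longlonglongrightarrow> c - 0"
    unfolding diff_divide_distrib by (intro tendsto_diff lim_a lim_b)
  have lim_bound: "(\<lambda>k. \<rho> k * (c + \<delta>) * (1 - (c + \<delta>) * gap k)) \<longlonglongrightarrow> 1 * (c + \<delta>) * (1 - (c + \<delta>) * 0)"
    by (intro tendsto_intros lim_rho gap_0)
  have "(\<lambda>k. (lam + \<delta>) * gap k) \<longlonglongrightarrow> 0" using tendsto_mult[OF tendsto_const gap_0] by simp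
  then have "eventually (\<lambda>k. (lam + \<delta>) * gap k < 1/2) sequentially" by (rule order_tendstoD(2)) simp
  then have half: "eventually (\<lambda>k. (lam + \<delta>) * gap k \<le> 1/2) sequentially" by (rule eventually_mono) simp
  have small: "eventually (\<lambda>k. gap k \<le> \<delta>) sequentially"
    using order_tendstoD(2)[OF gap_0, of \<delta>] assms by (auto elim: eventually_mono)
  have "eventually (\<lambda>k. a k \<le> (\<rho> k * (c + \<delta>) * (1 - (c + \<delta>) * gap k)) * gap k) sequentially"
    using assms by (intro eventually_le_gap[OF lim_a lim_bound]) simp
  then have a_upper: "eventually (\<lambda>k. a k \<le> \<rho> k * (c + \<delta>) * gap k * (1 - (c + \<delta>) * gap k)) sequentially"
    by (rule eventually_mono) (simp add: mult_ac)
  have "eventually (regular \<delta>) sequentially"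
    unfolding regular_def using assms
    by (intro eventually_conj small half a_upper eventually_ge_gap[OF lim_ab tendsto_const]
        eventually_ge_gap[OF lim_m tendsto_const] eventually_le_gap[OF lim_m tendsto_const]
        eventually_le_gap[OF lim_q tendsto_const]) auto
  then obtain K0 where "\<And>k. K0 \<le> k \<Longrightarrow> regular \<delta> k" unfolding eventually_sequentially by blast
  then show ?thesis by (intro that[of "max 1 K0"]) auto
qed

text \<open>The main object: in the probabilistic model \<open>Phi u n\<close> is \<open>E (1-u)^X\<^sub>n\<close>.\<close>

definition Phi :: "real \<Rightarrow> nat \<Rightarrow> real" where
  "Phi u n = (\<Prod>k\<in>{1..n}. h k (bcomp g k n u))"

text \<open>The weighted sum \<open>\<Sum>\<^sub>k\<^sub>>\<^sub>K (1 - \<rho>\<^sub>k) v\<^sub>k\<close> of the arguments \<open>v\<^sub>k\<close> of the tail factors, its \<open>\<delta>\<close>-dependent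
  upper bound, and the exponential rate used to bound the tail factors from below.\<close>

definition wsum :: "nat \<Rightarrow> nat \<Rightarrow> real \<Rightarrow> real" where
  "wsum K n u = (\<Sum>k\<in>{K<..n}. gap k * bcomp g k n u)"

definition sum_bound :: "real \<Rightarrow> real \<Rightarrow> real" where
  "sum_bound \<delta> u = (1 + (c - \<delta>) * \<delta>) / (c - \<delta>) * ln (1 + (c - \<delta>) * u)"

definition tail_rate :: "real \<Rightarrow> real" where
  "tail_rate \<delta> = (1 + 2 * (lam + \<delta>) * \<delta>) * (lam + \<delta>)"

lemma h_bcomp_range:
  "1 \<le> k \<Longrightarrow> 0 \<le> u \<Longrightarrow> u \<le> 1 \<Longrightarrow> 0 \<le> h k (bcomp g k n u) \<and> h k (bcomp g k n u) \<le> 1"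
  using h_nonneg h_le_1 bcomp_range[of u k n] by simp

text \<open>The factors
  with \<open>k \<le> K\<close> are close to 1 because their arguments are at most \<open>\<rho>\<^sub>K\<^sub>+\<^sub>1 \<cdots> \<rho>\<^sub>n\<close>; those with \<open>k > K\<close>
  are close to \<open>exp (- lam \<Sum> (1 - \<rho>\<^sub>k) v\<^sub>k)\<close>, and that sum is controlled by the comparison iterations.\<close>

context
  fixes \<delta> :: real and K :: nat and u :: real
  assumes \<delta>: "0 < \<delta>" "\<delta> < c" and K: "1 \<le> K" and reg: "\<And>k. K < k \<Longrightarrow> regular \<delta> k"
    and u: "0 < u" "u \<le> 1"
begin

lemma bcomp_bounds:
  assumes "K \<le> k" "k \<le> n"
  shows "flin (c + \<delta>) u k n \<le> bcomp g k n u" "bcomp g k n u \<le> flin (c - \<delta>) u k n"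
proof -
  show "flin (c + \<delta>) u k n \<le> bcomp g k n u"
    using assms \<delta> u c_pos reg
    by (intro flin_le_bcomp[where K=K] frac_lin_le_g) (auto simp: regular_def mult.assoc)
  show "bcomp g k n u \<le> flin (c - \<delta>) u k n"
    using assms \<delta> u reg by (intro bcomp_le_flin[where K=K] g_le_frac_lin) (auto simp: regular_def)
qed

text \<open>Hence the weighted sum is close to \<open>ln (1 + c u) / c\<close>.\<close>

lemma wsum_bounds:
  assumes "K \<le> n"
  shows "ln (1 + (c + \<delta>) * u * (1 - rprod K n)) / (c + \<delta>) \<le> wsum K n u"
    "wsum K n u \<le> sum_bound \<delta> u"
proof -
  have gap: "0 \<le> gap k" if "K < k" for k using gap_pos[of k] K that by simp
  have "ln (1 + (c + \<delta>) * u * (1 - rprod K n)) / (c + \<delta>) \<le> (\<Sum>k\<in>{K<..n}. gap k * flin (c + \<delta>) u k n)"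
    using \<delta> u c_pos assms by (intro sum_flin_lower) auto
  also have "\<dots> \<le> wsum K n u"
    unfolding wsum_def using bcomp_bounds(1) gap by (intro sum_mono mult_left_mono) auto
  finally show "ln (1 + (c + \<delta>) * u * (1 - rprod K n)) / (c + \<delta>) \<le> wsum K n u" .
  have "wsum K n u \<le> (\<Sum>k\<in>{K<..n}. gap k * flin (c - \<delta>) u k n)"
    unfolding wsum_def using bcomp_bounds(2) gap by (intro sum_mono mult_left_mono) auto
  also have "\<dots> \<le> sum_bound \<delta> u"
    unfolding sum_bound_def using \<delta> u assms reg by (intro sum_flin_upper) (auto simp: regular_def)
  finally show "wsum K n u \<le> sum_bound \<delta> u" .
qed

text \<open>Bounds on the tail product \<open>\<Prod>\<^sub>k\<^sub>>\<^sub>K\<close> via \<open>1 - m\<^sub>k v + q\<^sub>k v\<^sup>2 \<le> exp (\<dots>)\<close> and \<open>exp (-t - 2t\<^sup>2) \<le> 1 - t\<close>.\<close>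

lemma tail_upper:
  "(\<Prod>k\<in>{K<..n}. h k (bcomp g k n u)) \<le> exp (- (lam - 2 * \<delta>) * wsum K n u)"
proof -
  have "(\<Prod>k\<in>{K<..n}. h k (bcomp g k n u)) \<le> (\<Prod>k\<in>{K<..n}. exp (- (lam - 2 * \<delta>) * (gap k * bcomp g k n u)))"
  proof (intro prod_mono conjI)
    fix k assume k: "k \<in> {K<..n}"
    define v where "v = bcomp g k n u"
    have v: "0 \<le> v" "v \<le> 1" using bcomp_range[of u k n] u by (auto simp: v_def)
    have k1: "1 \<le> k" and rk: "regular \<delta> k" using k K reg by auto
    have gk: "0 \<le> gap k" using gap_pos[OF k1] by simp
    show "0 \<le> h k v" using h_nonneg k1 v by simp
    have "q k * v^2 \<le> \<delta> * gap k * v^2" using rk by (intro mult_right_mono) (auto simp: regular_def)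
    also have "\<dots> \<le> \<delta> * gap k * v" using v \<delta> gk by (intro mult_left_mono) (auto simp: power2_eq_square mult_left_le_one_le)
    finally have "h k v \<le> 1 - (lam - \<delta>) * gap k * v + \<delta> * gap k * v"
      using h_upper[OF k1 v] mult_right_mono[of "(lam - \<delta>) * gap k" "m k" v] rk v
      by (auto simp: regular_def)
    also have "\<dots> = 1 + (- (lam - 2 * \<delta>) * (gap k * v))" by (simp add: algebra_simps)
    also have "\<dots> \<le> exp (- (lam - 2 * \<delta>) * (gap k * v))" by (rule exp_ge_add_one_self)
    finally show "h k v \<le> exp (- (lam - 2 * \<delta>) * (gap k * v))" .
  qed
  also have "\<dots> = exp (- (lam - 2 * \<delta>) * wsum K n u)"
    by (simp add: wsum_def exp_sum sum_distrib_left)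
  finally show ?thesis .
qed

lemma tail_lower:
  assumes "K \<le> n"
  shows "exp (- tail_rate \<delta> * sum_bound \<delta> u) \<le> (\<Prod>k\<in>{K<..n}. h k (bcomp g k n u))"
proof -
  have rate: "0 \<le> tail_rate \<delta>" using lam_nonneg \<delta> by (simp add: tail_rate_def)
  have "exp (- tail_rate \<delta> * sum_bound \<delta> u) \<le> exp (- tail_rate \<delta> * wsum K n u)"
    using wsum_bounds(2)[OF assms] rate by (simp add: mult_left_mono)
  also have "\<dots> = (\<Prod>k\<in>{K<..n}. exp (- tail_rate \<delta> * (gap k * bcomp g k n u)))"
    by (simp add: wsum_def exp_sum sum_distrib_left)
  also have "\<dots> \<le> (\<Prod>k\<in>{K<..n}. h k (bcomp g k n u))"
  proof (intro prod_mono conjI)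
    fix k assume k: "k \<in> {K<..n}"
    define v where "v = bcomp g k n u"
    have v: "0 \<le> v" "v \<le> 1" using bcomp_range[of u k n] u by (auto simp: v_def)
    have k1: "1 \<le> k" and rk: "regular \<delta> k" using k K reg by auto
    have gk: "0 \<le> gap k" using gap_pos[OF k1] by simp
    define t where "t = (lam + \<delta>) * (gap k * v)"
    have t_upper: "t \<le> (lam + \<delta>) * gap k"
      unfolding t_def using lam_nonneg \<delta> gk v by (intro mult_left_mono) (auto simp: mult_right_le_one_le)
    have t: "0 \<le> t" "t \<le> 1/2"
      using lam_nonneg \<delta> gk v by (simp add: t_def) (use t_upper rk in \<open>simp add: regular_def\<close>)
    have "t \<le> (lam + \<delta>) * \<delta>"
      using t_upper rk lam_nonneg \<delta> by (auto simp: regular_def intro: order_trans mult_left_mono)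
    then have "t^2 \<le> ((lam + \<delta>) * \<delta>) * t" unfolding power2_eq_square using t by (intro mult_right_mono)
    then have "- tail_rate \<delta> * (gap k * v) \<le> - t - 2 * t^2" by (simp add: tail_rate_def t_def algebra_simps)
    then have "exp (- tail_rate \<delta> * (gap k * v)) \<le> exp (- t - 2 * t^2)" by simp
    also have "\<dots> \<le> 1 - t" using t by (rule exp_le_one_minus)
    also have "\<dots> \<le> 1 - m k * v"
      using rk v unfolding t_def by (simp add: regular_def mult.assoc[symmetric] mult_right_mono)
    also have "\<dots> \<le> h k v" using h_lower k1 v by simp
    finally show "exp (- tail_rate \<delta> * (gap k * v)) \<le> h k v" .
  qed simp
  finally show ?thesis .
qed

text \<open>The head product \<open>\<Prod>\<^sub>k\<^sub>\<le>\<^sub>K\<close> tends to 1, since its arguments are at most \<open>\<rho>\<^sub>K\<^sub>+\<^sub>1 \<cdots> \<rho>\<^sub>n\<close>.\<close>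

lemma head_lower:
  assumes "K \<le> n"
  shows "1 - (\<Sum>k\<in>{1..K}. m k) * rprod K n \<le> (\<Prod>k\<in>{1..K}. h k (bcomp g k n u))"
proof -
  have "1 - (\<Sum>k\<in>{1..K}. m k * bcomp g k n u) \<le> (\<Prod>k\<in>{1..K}. h k (bcomp g k n u))"
  proof (rule prod_ge_1_minus_sum)
    fix k assume k: "k \<in> {1..K}"
    have "0 \<le> bcomp g k n u" "bcomp g k n u \<le> 1" using bcomp_range[of u k n] u by auto
    then show "0 \<le> h k (bcomp g k n u) \<and> h k (bcomp g k n u) \<le> 1
        \<and> 1 - m k * bcomp g k n u \<le> h k (bcomp g k n u) \<and> 0 \<le> m k * bcomp g k n u"
      using h_nonneg h_le_1 h_lower m_nonneg k by auto
  qed simp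
  moreover have "(\<Sum>k\<in>{1..K}. m k * bcomp g k n u) \<le> (\<Sum>k\<in>{1..K}. m k * rprod K n)"
  proof (intro sum_mono mult_left_mono)
    fix k assume k: "k \<in> {1..K}"
    show "0 \<le> m k" using m_nonneg k by simp
    have "bcomp g k n u \<le> bcomp g K n u" using bcomp_mono u k assms by simp
    also have "\<dots> \<le> flin (c - \<delta>) u K n" using bcomp_bounds(2) assms by simp
    also have "\<dots> \<le> u * rprod K n" using flin_le \<delta> u by simp
    also have "\<dots> \<le> rprod K n" using u rprod_nonneg by (simp add: mult_left_le_one_le)
    finally show "bcomp g k n u \<le> rprod K n" .
  qed
  ultimately show ?thesis by (simp add: sum_distrib_right)
qed

lemma Phi_split:
  assumes "K \<le> n"
  shows "Phi u n = (\<Prod>k\<in>{1..K}. h k (bcomp g k n u)) * (\<Prod>k\<in>{K<..n}. h k (bcomp g k n u))"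
proof -
  have "{1..n} = {1..K} \<union> {K<..n}" using assms K by auto
  then show ?thesis unfolding Phi_def by (subst prod.union_disjoint[symmetric]) auto
qed

lemma Phi_upper:
  assumes "K \<le> n"
  shows "Phi u n \<le> exp (- lam * (ln (1 + (c + \<delta>) * u * (1 - rprod K n)) / (c + \<delta>)) + 2 * \<delta> * sum_bound \<delta> u)"
proof -
  have head: "0 \<le> (\<Prod>k\<in>{1..K}. h k (bcomp g k n u))" "(\<Prod>k\<in>{1..K}. h k (bcomp g k n u)) \<le> 1"
    using h_bcomp_range u by (auto intro: prod_nonneg prod_le_1)
  have tail: "0 \<le> (\<Prod>k\<in>{K<..n}. h k (bcomp g k n u))"
    using h_bcomp_range u K by (intro prod_nonneg) auto
  have "Phi u n \<le> exp (- (lam - 2 * \<delta>) * wsum K n u)"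
    unfolding Phi_split[OF assms] using head tail tail_upper by (meson mult_left_le_one_le order_trans)
  also have "\<dots> \<le> exp (- lam * (ln (1 + (c + \<delta>) * u * (1 - rprod K n)) / (c + \<delta>)) + 2 * \<delta> * sum_bound \<delta> u)"
  proof -
    have "lam * (ln (1 + (c + \<delta>) * u * (1 - rprod K n)) / (c + \<delta>)) \<le> lam * wsum K n u"
      using wsum_bounds(1)[OF assms] lam_nonneg by (rule mult_left_mono)
    moreover have "\<delta> * wsum K n u \<le> \<delta> * sum_bound \<delta> u"
      using wsum_bounds(2)[OF assms] \<delta> by simp
    moreover have "- (lam - 2 * \<delta>) * wsum K n u = - (lam * wsum K n u) + 2 * (\<delta> * wsum K n u)"
      by (simp add: algebra_simps)
    ultimately show ?thesis by simp
  qed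
  finally show ?thesis .
qed

lemma Phi_lower:
  assumes "K \<le> n"
  shows "max 0 (1 - (\<Sum>k\<in>{1..K}. m k) * rprod K n) * exp (- tail_rate \<delta> * sum_bound \<delta> u) \<le> Phi u n"
  unfolding Phi_split[OF assms] using head_lower[OF assms] tail_lower[OF assms] h_bcomp_range u
  by (intro mult_mono) (auto intro: prod_nonneg)

end

text \<open>Letting first \<open>n \<rightarrow> \<infinity>\<close> and then \<open>\<delta> \<rightarrow> 0\<close> gives the limit of \<open>Phi u n\<close>.\<close>

theorem Phi_tendsto:
  assumes u: "0 < u" "u \<le> 1"
  shows "(\<lambda>n. Phi u n) \<longlonglongrightarrow> exp (- (lam / c) * ln (1 + c * u))"
proof (rule tendsto_squeeze_param[OF _ _ c_pos])
  define Up where "Up \<delta> = exp (- lam * (ln (1 + (c + \<delta>) * u) / (c + \<delta>)) + 2 * \<delta> * sum_bound \<delta> u)" for \<delta>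
  define Lo where "Lo \<delta> = exp (- tail_rate \<delta> * sum_bound \<delta> u)" for \<delta>
  have cu: "0 < 1 + c * u" using c_pos u by (simp add: add_pos_nonneg)
  have "(Up \<longlongrightarrow> exp (- lam * (ln (1 + (c + 0) * u) / (c + 0)) + 2 * 0 * sum_bound 0 u)) (at_right 0)"
    unfolding Up_def sum_bound_def using c_pos cu by (intro tendsto_intros) auto
  then show "(Up \<longlongrightarrow> exp (- (lam / c) * ln (1 + c * u))) (at_right 0)" by simp
  have "(Lo \<longlongrightarrow> exp (- tail_rate 0 * sum_bound 0 u)) (at_right 0)"
    unfolding Lo_def sum_bound_def tail_rate_def using c_pos cu by (intro tendsto_intros) auto
  then show "(Lo \<longlongrightarrow> exp (- (lam / c) * ln (1 + c * u))) (at_right 0)"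
    by (simp add: tail_rate_def sum_bound_def)
  fix \<delta> :: real assume \<delta>: "0 < \<delta>" "\<delta> < c"
  obtain K where K: "1 \<le> K" "\<And>k. K < k \<Longrightarrow> regular \<delta> k" using eventually_regular[OF \<delta>] by blast
  define U' where "U' n = exp (- lam * (ln (1 + (c + \<delta>) * u * (1 - rprod K n)) / (c + \<delta>))
                              + 2 * \<delta> * sum_bound \<delta> u)" for n
  define L' where "L' n = max 0 (1 - (\<Sum>k\<in>{1..K}. m k) * rprod K n) * exp (- tail_rate \<delta> * sum_bound \<delta> u)" for n
  have "U' \<longlonglongrightarrow> exp (- lam * (ln (1 + (c + \<delta>) * u * (1 - 0)) / (c + \<delta>)) + 2 * \<delta> * sum_bound \<delta> u)"
  proof -
    have "0 < 1 + (c + \<delta>) * u" "0 < c + \<delta>" using c_pos \<delta> u by (simp_all add: add_pos_pos)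
    then show ?thesis unfolding U'_def by (intro tendsto_intros rprod_tendsto_0) auto
  qed
  moreover have "L' \<longlonglongrightarrow> max 0 (1 - (\<Sum>k\<in>{1..K}. m k) * 0) * exp (- tail_rate \<delta> * sum_bound \<delta> u)"
    unfolding L'_def by (intro tendsto_intros rprod_tendsto_0)
  moreover have "eventually (\<lambda>n. L' n \<le> Phi u n \<and> Phi u n \<le> U' n) sequentially"
    using eventually_ge_at_top[of K] by eventually_elim (use Phi_lower Phi_upper \<delta> K u in \<open>simp add: L'_def U'_def\<close>)
  ultimately show "\<exists>U' L'. U' \<longlonglongrightarrow> Up \<delta> \<and> L' \<longlonglongrightarrow> Lo \<delta> \<and> eventually (\<lambda>n. L' n \<le> Phi u n \<and> Phi u n \<le> U' n) sequentially"
    unfolding Up_def Lo_def by auto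
qed

end

subsection \<open>Generating functions of \<open>\<nat>\<close>-valued random variables\<close>

context prob_space
begin

lemma pgf_range:
  fixes Z :: "'a \<Rightarrow> nat" and x :: real
  assumes Z: "Z \<in> measurable M (count_space UNIV)" and x: "0 \<le> x" "x \<le> 1"
  shows "integrable M (\<lambda>\<omega>. x ^ Z \<omega>)" "0 \<le> (\<integral>\<omega>. x ^ Z \<omega> \<partial>M)" "(\<integral>\<omega>. x ^ Z \<omega> \<partial>M) \<le> 1"
proof -
  have "(\<lambda>\<omega>. x ^ Z \<omega>) \<in> borel_measurable M" using Z by measurable
  then show int: "integrable M (\<lambda>\<omega>. x ^ Z \<omega>)"
    using x by (intro integrable_const_bound[where B=1]) (auto simp: power_le_one)
  show "0 \<le> (\<integral>\<omega>. x ^ Z \<omega> \<partial>M)" using x by (intro integral_nonneg_AE) auto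
  have "(\<integral>\<omega>. x ^ Z \<omega> \<partial>M) \<le> (\<integral>\<omega>. 1 \<partial>M)"
    using int x by (intro integral_mono) (auto simp: power_le_one)
  then show "(\<integral>\<omega>. x ^ Z \<omega> \<partial>M) \<le> 1" by (simp add: prob_space)
qed

lemma expectation_sums_over_values:
  fixes Z :: "'a \<Rightarrow> nat" and W :: "nat \<Rightarrow> 'a \<Rightarrow> real"
  assumes Z: "Z \<in> measurable M (count_space UNIV)" and W: "\<And>m. W m \<in> borel_measurable M"
    and W_bounded: "\<And>m \<omega>. \<omega> \<in> space M \<Longrightarrow> \<bar>W m \<omega>\<bar> \<le> 1"
  shows "(\<lambda>m. \<integral>\<omega>. (if Z \<omega> = m then W m \<omega> else 0) \<partial>M) sums (\<integral>\<omega>. W (Z \<omega>) \<omega> \<partial>M)"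
proof -
  define s where "s N \<omega> = (\<Sum>m<N. (if Z \<omega> = m then W m \<omega> else 0))" for N \<omega>
  have s_eq: "s N \<omega> = (if Z \<omega> < N then W (Z \<omega>) \<omega> else 0)" for N \<omega>
    unfolding s_def by (subst sum.delta') auto
  have meas_if: "(\<lambda>\<omega>. if Z \<omega> = m then W m \<omega> else 0) \<in> borel_measurable M" for m
    using Z W by measurable
  have "(\<lambda>N. integral\<^sup>L M (s N)) \<longlonglongrightarrow> (\<integral>\<omega>. W (Z \<omega>) \<omega> \<partial>M)"
  proof (rule integral_dominated_convergence[where w="\<lambda>_. 1"])
    show "(\<lambda>\<omega>. W (Z \<omega>) \<omega>) \<in> borel_measurable M"
      by (rule measurable_compose_countable[where f="\<lambda>m \<omega>. W m \<omega>" and g=Z]) (use W Z in auto)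
    show "s N \<in> borel_measurable M" for N unfolding s_def using meas_if by measurable
    show "AE \<omega> in M. (\<lambda>N. s N \<omega>) \<longlonglongrightarrow> W (Z \<omega>) \<omega>"
    proof (intro AE_I2 tendsto_eventually)
      fix \<omega>
      show "eventually (\<lambda>N. s N \<omega> = W (Z \<omega>) \<omega>) sequentially"
        using eventually_gt_at_top[of "Z \<omega>"] by (rule eventually_mono) (simp add: s_eq)
    qed
    show "AE \<omega> in M. norm (s N \<omega>) \<le> 1" for N using W_bounded by (intro AE_I2) (auto simp: s_eq)
  qed simp
  moreover have "integral\<^sup>L M (s N) = (\<Sum>m<N. \<integral>\<omega>. (if Z \<omega> = m then W m \<omega> else 0) \<partial>M)" for N
    unfolding s_def using meas_if W_bounded
    by (subst Bochner_Integration.integral_sum) (auto intro: integrable_const_bound[where B=1])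
  ultimately show ?thesis unfolding sums_def by simp
qed

lemma integral_indicator_value:
  fixes Z :: "'a \<Rightarrow> nat" and c :: real
  assumes "Z \<in> measurable M (count_space UNIV)"
  shows "(\<integral>\<omega>. (if Z \<omega> = m then c else 0) \<partial>M) = prob {\<omega>\<in>space M. Z \<omega> = m} * c"
proof -
  have "(\<integral>\<omega>. (if Z \<omega> = m then c else 0) \<partial>M) = (\<integral>\<omega>. indicator {\<omega>\<in>space M. Z \<omega> = m} \<omega> * c \<partial>M)"
    by (rule Bochner_Integration.integral_cong) (auto simp: indicator_def)
  then show ?thesis using assms by simp
qed

lemma pgf_sums:
  fixes Z :: "'a \<Rightarrow> nat" and x :: real
  assumes Z: "Z \<in> measurable M (count_space UNIV)" and x: "0 \<le> x" "x \<le> 1"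
  shows "(\<lambda>m. prob {\<omega>\<in>space M. Z \<omega> = m} * x^m) sums (\<integral>\<omega>. x ^ Z \<omega> \<partial>M)"
  using expectation_sums_over_values[OF Z, of "\<lambda>m \<omega>. x^m"] x
  by (simp add: power_le_one integral_indicator_value[OF Z])

text \<open>Taylor bounds at 1 for \<open>u \<mapsto> 1 - E (1-u)^Z\<close> in terms of the factorial moments; they are
  the Bonferroni inequalities integrated against the law of \<open>Z\<close>.\<close>

lemma one_minus_pgf_eq:
  fixes Z :: "'a \<Rightarrow> nat" and u :: real
  assumes Z: "Z \<in> measurable M (count_space UNIV)" and u: "0 \<le> u" "u \<le> 1"
  shows "1 - (\<integral>\<omega>. (1-u) ^ Z \<omega> \<partial>M) = (\<integral>\<omega>. 1 - (1-u) ^ Z \<omega> \<partial>M)"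
    and "integrable M (\<lambda>\<omega>. 1 - (1-u) ^ Z \<omega>)"
proof -
  have "integrable M (\<lambda>\<omega>. (1-u) ^ Z \<omega>)" using pgf_range(1)[OF Z, of "1-u"] u by simp
  then show "1 - (\<integral>\<omega>. (1-u) ^ Z \<omega> \<partial>M) = (\<integral>\<omega>. 1 - (1-u) ^ Z \<omega> \<partial>M)"
    and "integrable M (\<lambda>\<omega>. 1 - (1-u) ^ Z \<omega>)"
    by (simp_all add: Bochner_Integration.integral_diff prob_space)
qed

lemma pgf_taylor_bounds:
  fixes Z :: "'a \<Rightarrow> nat" and u :: real
  assumes Z: "Z \<in> measurable M (count_space UNIV)" and u: "0 \<le> u" "u \<le> 1"
    and fin: "fact_moment_finite M Z 1" "fact_moment_finite M Z 2"
  shows "0 \<le> 1 - (\<integral>\<omega>. (1-u) ^ Z \<omega> \<partial>M)"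
    "1 - (\<integral>\<omega>. (1-u) ^ Z \<omega> \<partial>M) \<le> fact_moment M Z 1 * u"
    "fact_moment M Z 1 * u - fact_moment M Z 2 / 2 * u^2 \<le> 1 - (\<integral>\<omega>. (1-u) ^ Z \<omega> \<partial>M)"
proof -
  note eq = one_minus_pgf_eq[OF Z u]
  have i: "integrable M (\<lambda>\<omega>. falling_fact 1 (Z \<omega>))" "integrable M (\<lambda>\<omega>. falling_fact 2 (Z \<omega>))"
    using fin by (simp_all add: fact_moment_finite_def)
  show "0 \<le> 1 - (\<integral>\<omega>. (1-u) ^ Z \<omega> \<partial>M)"
    unfolding eq(1) using one_minus_pow_bounds(1)[OF u] by (intro integral_nonneg_AE) auto
  have "(\<integral>\<omega>. 1 - (1-u) ^ Z \<omega> \<partial>M) \<le> (\<integral>\<omega>. falling_fact 1 (Z \<omega>) * u \<partial>M)"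
    using eq(2) i one_minus_pow_bounds(2)[OF u] by (intro integral_mono) auto
  then show "1 - (\<integral>\<omega>. (1-u) ^ Z \<omega> \<partial>M) \<le> fact_moment M Z 1 * u"
    unfolding eq(1) by (simp add: fact_moment_def)
  have "(\<integral>\<omega>. falling_fact 1 (Z \<omega>) * u - falling_fact 2 (Z \<omega>) / 2 * u^2 \<partial>M) \<le> (\<integral>\<omega>. 1 - (1-u) ^ Z \<omega> \<partial>M)"
    using eq(2) i one_minus_pow_quadratic_lower[OF u] by (intro integral_mono) auto
  then show "fact_moment M Z 1 * u - fact_moment M Z 2 / 2 * u^2 \<le> 1 - (\<integral>\<omega>. (1-u) ^ Z \<omega> \<partial>M)"
    unfolding eq(1) using i by (simp add: fact_moment_def Bochner_Integration.integral_diff)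
qed

lemma pgf_taylor_cubic:
  fixes Z :: "'a \<Rightarrow> nat" and u :: real
  assumes Z: "Z \<in> measurable M (count_space UNIV)" and u: "0 \<le> u" "u \<le> 1"
    and fin: "fact_moment_finite M Z 1" "fact_moment_finite M Z 2" "fact_moment_finite M Z 3"
  shows "1 - (\<integral>\<omega>. (1-u) ^ Z \<omega> \<partial>M)
    \<le> fact_moment M Z 1 * u - fact_moment M Z 2 / 2 * u^2 + fact_moment M Z 3 / 6 * u^3"
proof -
  note eq = one_minus_pgf_eq[OF Z u]
  have i: "integrable M (\<lambda>\<omega>. falling_fact 1 (Z \<omega>))" "integrable M (\<lambda>\<omega>. falling_fact 2 (Z \<omega>))"
    "integrable M (\<lambda>\<omega>. falling_fact 3 (Z \<omega>))"
    using fin by (simp_all add: fact_moment_finite_def)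
  have "(\<integral>\<omega>. 1 - (1-u) ^ Z \<omega> \<partial>M)
      \<le> (\<integral>\<omega>. falling_fact 1 (Z \<omega>) * u - falling_fact 2 (Z \<omega>) / 2 * u^2 + falling_fact 3 (Z \<omega>) / 6 * u^3 \<partial>M)"
    using eq(2) i one_minus_pow_cubic_upper[OF u] by (intro integral_mono) auto
  then show ?thesis
    unfolding eq(1) using i
    by (simp add: fact_moment_def Bochner_Integration.integral_diff Bochner_Integration.integral_add)
qed

end

text \<open>Continuity theorem for generating functions: convergence of the generating functions on
  \<open>[0, 1)\<close> implies convergence of every coefficient.  The tail of the series beyond \<open>k\<close> is at
  most \<open>x^(k+1)\<close>, so the \<open>k\<close>-th coefficient is recovered up to \<open>O(x)\<close> after dividing by \<open>x^k\<close>.\<close>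

lemma pgf_tail:
  fixes p :: "nat \<Rightarrow> real" and x :: real
  assumes p: "\<And>i. 0 \<le> p i" "summable p" "suminf p \<le> 1" and x: "0 \<le> x" "x \<le> 1"
  shows "0 \<le> (\<Sum>i. p i * x^i) - (\<Sum>i<Suc k. p i * x^i)"
    "(\<Sum>i. p i * x^i) - (\<Sum>i<Suc k. p i * x^i) \<le> x^(Suc k)"
proof -
  have sm: "summable (\<lambda>i. p i * x^i)"
    using p x by (intro summable_comparison_test'[OF p(2), of 0]) (auto simp: mult_left_le power_le_one)
  have split: "(\<Sum>i. p i * x^i) - (\<Sum>i<Suc k. p i * x^i) = (\<Sum>j. p (j + Suc k) * x^(j + Suc k))"
    using suminf_split_initial_segment[OF sm, of "Suc k"] by simp
  have sm_tail: "summable (\<lambda>j. p (j + Suc k) * x^(j + Suc k))"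
    using summable_ignore_initial_segment[OF sm, of "Suc k"] by simp
  have sp_tail: "summable (\<lambda>j. p (j + Suc k))" by (rule summable_ignore_initial_segment[OF p(2)])
  show "0 \<le> (\<Sum>i. p i * x^i) - (\<Sum>i<Suc k. p i * x^i)"
    unfolding split by (rule suminf_nonneg[OF sm_tail]) (use p x in simp)
  have "(\<Sum>j. p (j + Suc k) * x^(j + Suc k)) \<le> (\<Sum>j. p (j + Suc k) * x^(Suc k))"
    using p x sm_tail sp_tail by (intro suminf_le) (auto intro!: mult_left_mono power_decreasing summable_mult2)
  also have "\<dots> = (\<Sum>j. p (j + Suc k)) * x^(Suc k)" using sp_tail by (simp add: suminf_mult2)
  also have "\<dots> \<le> 1 * x^(Suc k)"
  proof (rule mult_right_mono)
    have "(\<Sum>j. p (j + Suc k)) = suminf p - (\<Sum>i<Suc k. p i)"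
      using suminf_split_initial_segment[OF p(2), of "Suc k"] by simp
    moreover have "0 \<le> (\<Sum>i<Suc k. p i)" using p(1) by (simp add: sum_nonneg)
    ultimately show "(\<Sum>j. p (j + Suc k)) \<le> 1" using p(3) by linarith
  qed (use x in simp)
  finally show "(\<Sum>i. p i * x^i) - (\<Sum>i<Suc k. p i * x^i) \<le> x^(Suc k)" unfolding split by simp
qed

theorem pgf_continuity:
  fixes p :: "nat \<Rightarrow> nat \<Rightarrow> real" and q :: "nat \<Rightarrow> real"
  assumes p: "\<And>n i. 0 \<le> p n i" "\<And>n. summable (p n)" "\<And>n. suminf (p n) \<le> 1"
    and q: "\<And>i. 0 \<le> q i" "summable q" "suminf q \<le> 1"
    and conv: "\<And>x. 0 \<le> x \<Longrightarrow> x < 1 \<Longrightarrow> (\<lambda>n. \<Sum>i. p n i * x^i) \<longlonglongrightarrow> (\<Sum>i. q i * x^i)"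
  shows "(\<lambda>n. p n k) \<longlonglongrightarrow> q k"
proof (induction k rule: less_induct)
  case (less k)
  show ?case
    unfolding tendsto_iff
  proof (intro allI impI)
    fix \<epsilon> :: real assume \<epsilon>: "0 < \<epsilon>"
    define x where "x = min (1/2) (\<epsilon>/4)"
    have x: "0 < x" "x < 1" "x \<le> \<epsilon>/4" using \<epsilon> by (auto simp: x_def)
    have xk: "0 < x^k" using x by simp
    define Dn where "Dn n = (\<Sum>i. p n i * x^i) - (\<Sum>i<k. p n i * x^i)" for n
    define D where "D = (\<Sum>i. q i * x^i) - (\<Sum>i<k. q i * x^i)"
    have "Dn \<longlonglongrightarrow> D"
      unfolding Dn_def[abs_def] D_def using x less by (intro tendsto_intros conv) auto
    then have "eventually (\<lambda>n. dist (Dn n) D < x^k * (\<epsilon>/4)) sequentially"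
      by (rule tendstoD) (use xk \<epsilon> in simp)
    then show "eventually (\<lambda>n. dist (p n k) (q k) < \<epsilon>) sequentially"
    proof (rule eventually_mono)
      fix n assume close: "dist (Dn n) D < x^k * (\<epsilon>/4)"
      have "0 \<le> Dn n - p n k * x^k" "Dn n - p n k * x^k \<le> x^(Suc k)"
        using pgf_tail[of "p n" x k] p x unfolding Dn_def by auto
      moreover have "0 \<le> D - q k * x^k" "D - q k * x^k \<le> x^(Suc k)"
        using pgf_tail[of q x k] q x unfolding D_def by auto
      moreover have "\<bar>p n k - q k\<bar> * x^k = \<bar>p n k * x^k - q k * x^k\<bar>"
        using xk by (simp add: abs_mult left_diff_distrib[symmetric])
      ultimately have "\<bar>p n k - q k\<bar> * x^k \<le> \<bar>Dn n - D\<bar> + x^k * x" by (simp add: mult.commute)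
      also have "\<dots> < x^k * (\<epsilon>/2)"
      proof -
        have "\<bar>Dn n - D\<bar> < x^k * (\<epsilon>/4)" using close by (simp add: dist_real_def)
        moreover have "x^k * x \<le> x^k * (\<epsilon>/4)" using x xk by (intro mult_left_mono) auto
        moreover have "x^k * (\<epsilon>/4) + x^k * (\<epsilon>/4) = x^k * (\<epsilon>/2)" by (simp add: field_simps)
        ultimately show ?thesis by linarith
      qed
      finally show "dist (p n k) (q k) < \<epsilon>" using xk \<epsilon> by (simp add: dist_real_def mult.commute)
    qed
  qed
qed

subsection \<open>The negative binomial law\<close>

lemma nb_prob_nonneg: "0 \<le> r \<Longrightarrow> 0 \<le> p \<Longrightarrow> 0 \<le> nb_prob r p k"
proof -
  assume r: "0 \<le> r" and p: "0 \<le> p"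
  have "((r + real k - 1) gchoose k) = pochhammer r k / fact k"
    using gbinomial_pochhammer'[of "r + real k - 1" k] by simp
  moreover have "0 \<le> pochhammer r k" unfolding pochhammer_prod using r by (intro prod_nonneg) auto
  ultimately show ?thesis unfolding nb_prob_def using p by simp
qed

text \<open>The generating function of \<open>NB(r,p)\<close> is \<open>((1-p)/(1-px))^r\<close>, by Newton's binomial series.\<close>

lemma nb_pgf_sums:
  fixes r p x :: real
  assumes r: "0 \<le> r" and p: "0 \<le> p" "p < 1" and x: "0 \<le> x" "x \<le> 1"
  shows "(\<lambda>k. nb_prob r p k * x^k) sums ((1 - p) powr r * (1 - p * x) powr (- r))"
proof -
  have "\<bar>- (p * x)\<bar> < 1" using p x mult_left_le[of x p] by (simp add: abs_mult)
  then have "(\<lambda>k. (1 - p) powr r * (((- r) gchoose k) * (- (p * x))^k))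
      sums ((1 - p) powr r * (1 + - (p * x)) powr (- r))"
    by (intro sums_mult gen_binomial_real)
  moreover have "(1 - p) powr r * (((- r) gchoose k) * (- (p * x))^k) = nb_prob r p k * x^k" for k
  proof -
    have "((- r) gchoose k) = (-1)^k * ((real k - (- r) - 1) gchoose k)" by (rule gbinomial_negated_upper)
    then have "((- r) gchoose k) * (- (p * x))^k = ((r + real k - 1) gchoose k) * (p^k * x^k)"
      by (simp add: power_minus' power_mult_distrib algebra_simps)
    then show ?thesis unfolding nb_prob_def by (simp add: mult_ac)
  qed
  ultimately show ?thesis by simp
qed

lemma nb_prob_sums_1:
  assumes "0 \<le> r" "0 \<le> p" "p < 1"
  shows "nb_prob r p sums 1"
proof -
  have "(1 - p) powr r * (1 - p * 1) powr (- r) = 1" using assms by (simp add: powr_minus)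
  then show ?thesis using nb_pgf_sums[OF assms, of 1] by simp
qed

lemma nb_pgf_eq:
  fixes c x lam r p :: real
  assumes c: "0 < c" and x: "x < 1" and r: "r = lam / c" and p: "p = c / (1 + c)"
  shows "(1 - p) powr r * (1 - p * x) powr (- r) = exp (- (lam / c) * ln (1 + c * (1 - x)))"
proof -
  have pos: "0 < 1 + c * (1 - x)" using c x by (intro add_pos_pos) auto
  have "1 - p = 1 / (1 + c)" "1 - p * x = (1 + c * (1 - x)) / (1 + c)"
    using c by (simp_all add: p field_simps)
  moreover have "(1 / (1 + c)) powr r * ((1 + c * (1 - x)) / (1 + c)) powr (- r)
      = exp (- (lam / c) * ln (1 + c * (1 - x)))"
    using pos c by (simp add: r powr_def ln_div exp_add[symmetric] algebra_simps)
  ultimately show ?thesis by simp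
qed

text \<open>For laws concentrated on \<open>\<nat>\<close> the distribution function at \<open>t\<close> is a finite sum of point
  probabilities, so pointwise convergence of the point probabilities gives weak convergence.\<close>

lemma finite_nat_le_real: "finite {k::nat. real k \<le> t}"
proof (rule finite_subset)
  show "{k::nat. real k \<le> t} \<subseteq> {..nat \<lceil>t\<rceil>}"
  proof
    fix k assume "k \<in> {k::nat. real k \<le> t}"
    then have "real k \<le> t" by simp
    then have "real k \<le> real (nat \<lceil>t\<rceil>)" using real_nat_ceiling_ge[of t] by linarith
    then show "k \<in> {..nat \<lceil>t\<rceil>}" by simp
  qed
qed simp

lemma cdf_nat_density:
  assumes "\<And>k. 0 \<le> f k"
  shows "cdf (distr (density (count_space UNIV) (\<lambda>k::nat. ennreal (f k))) borel real) t = (\<Sum>k | real k \<le> t. f k)"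
proof -
  define D where "D = density (count_space UNIV) (\<lambda>k::nat. ennreal (f k))"
  have "cdf (distr D borel real) t = measure D (real -` {..t} \<inter> space D)"
    unfolding cdf_def by (rule measure_distr) (auto simp: D_def)
  also have "real -` {..t} \<inter> space D = {k. real k \<le> t}" by (auto simp: D_def)
  also have "measure D {k. real k \<le> t} = enn2real (\<Sum>k | real k \<le> t. ennreal (f k))"
    unfolding measure_def D_def
    by (subst emeasure_density) (auto simp: nn_integral_indicator_finite[OF finite_nat_le_real])
  also have "\<dots> = (\<Sum>k | real k \<le> t. f k)" using assms by (simp add: sum_nonneg)
  finally show ?thesis by (simp add: D_def)
qed

context prob_space
begin

lemma cdf_distr_nat:
  assumes Z: "Z \<in> measurable M (count_space UNIV)"
  shows "cdf (distr M borel (\<lambda>\<omega>. real (Z \<omega>))) t = (\<Sum>k | real k \<le> t. prob {\<omega> \<in> space M. Z \<omega> = k})"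
proof -
  have "(\<lambda>\<omega>. real (Z \<omega>)) \<in> borel_measurable M" using Z by measurable
  then have "cdf (distr M borel (\<lambda>\<omega>. real (Z \<omega>))) t = prob ((\<lambda>\<omega>. real (Z \<omega>)) -` {..t} \<inter> space M)"
    unfolding cdf_def by (rule measure_distr) simp
  also have "(\<lambda>\<omega>. real (Z \<omega>)) -` {..t} \<inter> space M = (\<Union>k\<in>{k. real k \<le> t}. {\<omega> \<in> space M. Z \<omega> = k})"
    by auto
  also have "prob \<dots> = (\<Sum>k | real k \<le> t. prob {\<omega> \<in> space M. Z \<omega> = k})"
    using Z by (intro measure_finite_Union finite_nat_le_real) (auto simp: disjoint_family_on_def emeasure_eq_measure)
  finally show ?thesis .
qed

theorem weak_conv_of_point_probs:
  assumes Z: "\<And>n. Z n \<in> measurable M (count_space UNIV)" and f: "\<And>k. 0 \<le> f k"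
    and lim: "\<And>k. (\<lambda>n. prob {\<omega> \<in> space M. Z n \<omega> = k}) \<longlonglongrightarrow> f k"
  shows "weak_conv_m (\<lambda>n. distr M borel (\<lambda>\<omega>. real (Z n \<omega>)))
           (distr (density (count_space UNIV) (\<lambda>k::nat. ennreal (f k))) borel real)"
  unfolding weak_conv_m_def weak_conv_def cdf_distr_nat[OF Z] cdf_nat_density[OF f]
  by (intro allI impI tendsto_sum lim)

end

subsection \<open>The branching process with immigration\<close>

lemma measurable_nat_sum:
  fixes f :: "nat \<Rightarrow> 'a \<Rightarrow> nat"
  assumes "\<And>j. j \<in> {1..i} \<Longrightarrow> f j \<in> measurable M (count_space UNIV)"
  shows "(\<lambda>\<omega>. \<Sum>j\<in>{1..i}. f j \<omega>) \<in> measurable M (count_space UNIV)"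
  using assms
proof (induction i)
  case (Suc i)
  have "(\<lambda>\<omega>. \<Sum>j\<in>{1..i}. f j \<omega>) \<in> measurable M (count_space UNIV)"
    and "f (Suc i) \<in> measurable M (count_space UNIV)" using Suc by auto
  then have "(\<lambda>\<omega>. (\<Sum>j\<in>{1..i}. f j \<omega>) + f (Suc i) \<omega>) \<in> measurable M (count_space UNIV)"
    by measurable
  then show ?case by (simp add: add.commute)
qed simp

lemma measurable_nat_add:
  fixes f g :: "'a \<Rightarrow> nat"
  assumes "f \<in> measurable M (count_space UNIV)" "g \<in> measurable M (count_space UNIV)"
  shows "(\<lambda>x. f x + g x) \<in> measurable M (count_space UNIV)"
  using assms by measurable

locale branching_immigration = prob_space M for M :: "'a measure" +
  fixes \<xi> :: "nat \<Rightarrow> nat \<Rightarrow> 'a \<Rightarrow> nat" and \<epsilon> :: "nat \<Rightarrow> 'a \<Rightarrow> nat"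
  assumes meas_xi: "\<And>n j. n \<ge> 1 \<Longrightarrow> j \<ge> 1 \<Longrightarrow> \<xi> n j \<in> measurable M (count_space UNIV)"
    and meas_eps: "\<And>n. n \<ge> 1 \<Longrightarrow> \<epsilon> n \<in> measurable M (count_space UNIV)"
    and indep: "indep_vars (\<lambda>_. count_space UNIV)
                  (\<lambda>i. case i of Inl (n, j) \<Rightarrow> \<xi> n j | Inr n \<Rightarrow> \<epsilon> n)
                  ({Inl (n, j) | n j. n \<ge> 1 \<and> j \<ge> 1} \<union> {Inr n | n. n \<ge> 1})"
    and ident: "\<And>n j. n \<ge> 1 \<Longrightarrow> j \<ge> 1 \<Longrightarrow>
                  distr M (count_space UNIV) (\<xi> n j) = distr M (count_space UNIV) (\<xi> n 1)"
begin

abbreviation X :: "nat \<Rightarrow> 'a \<Rightarrow> nat" where "X n \<equiv> bp_X \<xi> \<epsilon> n"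

text \<open>All driving variables as one family indexed by \<open>Inl (n, j)\<close> (offspring) and \<open>Inr n\<close>
  (immigration); \<open>past n\<close> indexes those that determine \<open>X\<^sub>n\<close>, and \<open>next_gen n m\<close> those
  used in step \<open>n+1\<close> when \<open>X\<^sub>n = m\<close>.\<close>

definition family :: "(nat \<times> nat) + nat \<Rightarrow> 'a \<Rightarrow> nat" where
  "family i = (case i of Inl (n, j) \<Rightarrow> \<xi> n j | Inr n \<Rightarrow> \<epsilon> n)"

definition indices :: "((nat \<times> nat) + nat) set" where
  "indices = {Inl (n, j) | n j. n \<ge> 1 \<and> j \<ge> 1} \<union> {Inr n | n. n \<ge> 1}"

definition past :: "nat \<Rightarrow> ((nat \<times> nat) + nat) set" where
  "past n = {Inl (k, j) | k j. 1 \<le> k \<and> k \<le> n \<and> 1 \<le> j} \<union> {Inr k | k. 1 \<le> k \<and> k \<le> n}"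

definition next_gen :: "nat \<Rightarrow> nat \<Rightarrow> ((nat \<times> nat) + nat) set" where
  "next_gen n m = {Inl (Suc n, j) | j. 1 \<le> j \<and> j \<le> m} \<union> {Inr (Suc n)}"

definition X_of :: "nat \<Rightarrow> ((nat \<times> nat) + nat \<Rightarrow> nat) \<Rightarrow> nat" where
  "X_of n f = bp_X (\<lambda>k j f. f (Inl (k, j))) (\<lambda>k f. f (Inr k)) n f"

lemma indep_family: "indep_vars (\<lambda>_. count_space UNIV) family indices"
  using indep unfolding family_def indices_def .

lemma family_meas: "i \<in> indices \<Longrightarrow> family i \<in> measurable M (count_space UNIV)"
  unfolding indices_def family_def using meas_xi meas_eps by auto

lemma X_meas: "X n \<in> measurable M (count_space UNIV)"
proof (induction n)
  case (Suc n)
  have "(\<lambda>\<omega>. (\<lambda>i \<omega>. (\<Sum>j\<in>{1..i}. \<xi> (Suc n) j \<omega>) + \<epsilon> (Suc n) \<omega>) (X n \<omega>) \<omega>) \<in> measurable M (count_space UNIV)"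
  proof (rule measurable_compose_countable[OF _ Suc])
    fix i
    have "(\<lambda>\<omega>. \<Sum>j\<in>{1..i}. \<xi> (Suc n) j \<omega>) \<in> measurable M (count_space UNIV)"
      by (rule measurable_nat_sum) (auto intro: meas_xi)
    with meas_eps[of "Suc n"]
    show "(\<lambda>\<omega>. (\<Sum>j\<in>{1..i}. \<xi> (Suc n) j \<omega>) + \<epsilon> (Suc n) \<omega>) \<in> measurable M (count_space UNIV)"
      by measurable
  qed
  then show ?case by simp
qed simp

lemma X_of_meas: "k \<le> n \<Longrightarrow> X_of k \<in> measurable (PiM (past n) (\<lambda>_. count_space UNIV)) (count_space UNIV)"
proof (induction k)
  case 0
  have "X_of 0 = (\<lambda>_. 0)" by (rule ext) (simp add: X_of_def)
  then show ?case by simp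
next
  case (Suc k)
  let ?P = "PiM (past n) (\<lambda>_. count_space UNIV) :: ((nat \<times> nat) + nat \<Rightarrow> nat) measure"
  have "(\<lambda>f. (\<lambda>i f. (\<Sum>j\<in>{1..i}. f (Inl (Suc k, j))) + f (Inr (Suc k))) (X_of k f) f) \<in> measurable ?P (count_space UNIV)"
  proof (rule measurable_compose_countable[OF _ Suc.IH])
    fix i
    have "(\<lambda>f. \<Sum>j\<in>{1..i}. f (Inl (Suc k, j))) \<in> measurable ?P (count_space UNIV)"
      using Suc.prems by (intro measurable_nat_sum measurable_component_singleton) (auto simp: past_def)
    moreover have "(\<lambda>f. f (Inr (Suc k))) \<in> measurable ?P (count_space UNIV)"
      using Suc.prems by (intro measurable_component_singleton) (auto simp: past_def)
    ultimately show "(\<lambda>f. (\<Sum>j\<in>{1..i}. f (Inl (Suc k, j))) + f (Inr (Suc k))) \<in> measurable ?P (count_space UNIV)"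
      by (rule measurable_nat_add)
  qed (use Suc.prems in simp)
  then show ?case by (simp add: X_of_def)
qed

lemma X_of_restrict: "k \<le> n \<Longrightarrow> X_of k (restrict (\<lambda>i. family i \<omega>) (past n)) = X k \<omega>"
proof (induction k)
  case (Suc k)
  have IH: "X_of k (restrict (\<lambda>i. family i \<omega>) (past n)) = X k \<omega>"
    using Suc.IH Suc.prems by (simp add: restrict_def)
  have "X_of (Suc k) (restrict (\<lambda>i. family i \<omega>) (past n))
      = (\<Sum>j\<in>{1..X k \<omega>}. restrict (\<lambda>i. family i \<omega>) (past n) (Inl (Suc k, j)))
        + restrict (\<lambda>i. family i \<omega>) (past n) (Inr (Suc k))"
    using IH by (simp add: X_of_def)
  also have "\<dots> = (\<Sum>j\<in>{1..X k \<omega>}. \<xi> (Suc k) j \<omega>) + \<epsilon> (Suc k) \<omega>"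
    using Suc.prems by (intro arg_cong2[where f="(+)"] sum.cong) (auto simp: past_def family_def)
  finally show ?case by (simp add: restrict_def)
qed (simp add: X_of_def)

lemma indep_past_next_gen:
  "indep_var (PiM (past n) (\<lambda>_. count_space UNIV)) (\<lambda>\<omega>. restrict (\<lambda>i. family i \<omega>) (past n))
     (PiM (next_gen n m) (\<lambda>_. count_space UNIV)) (\<lambda>\<omega>. restrict (\<lambda>i. family i \<omega>) (next_gen n m))"
proof -
  define I where "I b = (if b then past n else next_gen n m)" for b
  have indep_I: "indep_vars (\<lambda>b. PiM (I b) (\<lambda>_. count_space UNIV)) (\<lambda>b \<omega>. restrict (\<lambda>i. family i \<omega>) (I b)) UNIV"
    by (rule indep_vars_restrict[OF indep_family])
      (auto simp: I_def past_def next_gen_def indices_def disjoint_family_on_def)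
  have spaces: "(\<lambda>b. PiM (I b) (\<lambda>_. count_space UNIV))
      = case_bool (PiM (past n) (\<lambda>_. count_space UNIV)) (PiM (next_gen n m) (\<lambda>_. count_space UNIV))"
    by (rule ext) (simp add: I_def split: bool.split)
  have vars: "(\<lambda>b \<omega>. restrict (\<lambda>i. family i \<omega>) (I b))
      = case_bool (\<lambda>\<omega>. restrict (\<lambda>i. family i \<omega>) (past n)) (\<lambda>\<omega>. restrict (\<lambda>i. family i \<omega>) (next_gen n m))"
    by (rule ext) (simp add: I_def split: bool.split)
  show ?thesis unfolding indep_var_def using indep_I[unfolded spaces vars] .
qed

definition G :: "nat \<Rightarrow> real \<Rightarrow> real" where "G k x = (\<integral>\<omega>. x ^ \<xi> k 1 \<omega> \<partial>M)"
definition H :: "nat \<Rightarrow> real \<Rightarrow> real" where "H k x = (\<integral>\<omega>. x ^ \<epsilon> k \<omega> \<partial>M)"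
definition F :: "nat \<Rightarrow> real \<Rightarrow> real" where "F n x = (\<integral>\<omega>. x ^ X n \<omega> \<partial>M)"

definition step_power :: "real \<Rightarrow> nat \<Rightarrow> nat \<Rightarrow> 'a \<Rightarrow> real" where
  "step_power x n m \<omega> = x ^ ((\<Sum>j\<in>{1..m}. \<xi> (Suc n) j \<omega>) + \<epsilon> (Suc n) \<omega>)"

lemma step_power_meas: "step_power x n m \<in> borel_measurable M"
proof -
  have "(\<lambda>\<omega>. (\<Sum>j\<in>{1..m}. \<xi> (Suc n) j \<omega>) + \<epsilon> (Suc n) \<omega>) \<in> measurable M (count_space UNIV)"
    by (intro measurable_nat_add measurable_nat_sum meas_xi meas_eps) auto
  then show ?thesis unfolding step_power_def[abs_def] by measurable
qed

lemma prod_next_gen: "(\<Prod>i\<in>next_gen n m. f i) = (\<Prod>j\<in>{1..m}. f (Inl (Suc n, j))) * f (Inr (Suc n))"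
  for f :: "_ \<Rightarrow> real"
proof -
  have "next_gen n m = insert (Inr (Suc n)) ((\<lambda>j. Inl (Suc n, j)) ` {1..m})"
    unfolding next_gen_def by auto
  then have "(\<Prod>i\<in>next_gen n m. f i) = f (Inr (Suc n)) * (\<Prod>i\<in>(\<lambda>j. Inl (Suc n, j)) ` {1..m}. f i)"
    by (simp only:) (subst prod.insert; auto)
  also have "(\<Prod>i\<in>(\<lambda>j. Inl (Suc n, j)) ` {1..m}. f i) = (\<Prod>j\<in>{1..m}. f (Inl (Suc n, j)))"
    by (subst prod.reindex) (auto simp: inj_on_def)
  finally show ?thesis by simp
qed

lemma integral_xi_power:
  assumes "k \<ge> 1" "j \<ge> 1"
  shows "(\<integral>\<omega>. x ^ \<xi> k j \<omega> \<partial>M) = G k x"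
proof -
  have "(\<integral>\<omega>. x ^ \<xi> k j \<omega> \<partial>M) = integral\<^sup>L (distr M (count_space UNIV) (\<xi> k j)) (\<lambda>z. x ^ z)"
    using meas_xi[OF assms] by (subst integral_distr) auto
  also have "\<dots> = integral\<^sup>L (distr M (count_space UNIV) (\<xi> k 1)) (\<lambda>z. x ^ z)"
    using ident[OF assms] by simp
  also have "\<dots> = G k x"
    using meas_xi[OF assms(1), of 1] unfolding G_def by (subst integral_distr) auto
  finally show ?thesis .
qed

lemma integral_step_power:
  assumes x: "0 \<le> x" "x \<le> 1"
  shows "(\<integral>\<omega>. step_power x n m \<omega> \<partial>M) = (G (Suc n) x)^m * H (Suc n) x"
proof -
  have sub: "next_gen n m \<subseteq> indices" unfolding next_gen_def indices_def by auto
  have "step_power x n m \<omega> = (\<Prod>i\<in>next_gen n m. x ^ family i \<omega>)" for \<omega>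
    unfolding step_power_def prod_next_gen by (simp add: power_add power_sum family_def)
  then have "(\<integral>\<omega>. step_power x n m \<omega> \<partial>M) = (\<integral>\<omega>. (\<Prod>i\<in>next_gen n m. x ^ family i \<omega>) \<partial>M)"
    by simp
  also have "\<dots> = (\<Prod>i\<in>next_gen n m. \<integral>\<omega>. x ^ family i \<omega> \<partial>M)"
  proof (rule indep_vars_lebesgue_integral)
    show "indep_vars (\<lambda>_. borel) (\<lambda>i \<omega>. x ^ family i \<omega>) (next_gen n m)"
      by (rule indep_vars_compose2[OF indep_vars_subset[OF indep_family sub], where Y="\<lambda>i k. x ^ k"]) simp
    show "integrable M (\<lambda>\<omega>. x ^ family i \<omega>)" if "i \<in> next_gen n m" for i
      using pgf_range(1)[OF family_meas x] that sub by auto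
  qed (simp add: next_gen_def)
  also have "\<dots> = (\<Prod>j\<in>{1..m}. \<integral>\<omega>. x ^ \<xi> (Suc n) j \<omega> \<partial>M) * H (Suc n) x"
    by (simp add: prod_next_gen family_def H_def)
  also have "\<dots> = (G (Suc n) x)^m * H (Suc n) x"
    using integral_xi_power[of "Suc n"] by simp
  finally show ?thesis .
qed

text \<open>The event \<open>X\<^sub>n = m\<close> depends only on \<open>past n\<close>, hence is independent of \<open>step_power x n m\<close>.\<close>

lemma integral_step_power_on_event:
  assumes x: "0 \<le> x" "x \<le> 1"
  shows "(\<integral>\<omega>. (if X n \<omega> = m then step_power x n m \<omega> else 0) \<partial>M)
        = prob {\<omega>\<in>space M. X n \<omega> = m} * (\<integral>\<omega>. step_power x n m \<omega> \<partial>M)"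
proof -
  let ?PP = "PiM (past n) (\<lambda>_. count_space UNIV) :: ((nat \<times> nat) + nat \<Rightarrow> nat) measure"
  let ?PN = "PiM (next_gen n m) (\<lambda>_. count_space UNIV) :: ((nat \<times> nat) + nat \<Rightarrow> nat) measure"
  define event where "event f = (if X_of n f = m then 1 else 0 :: real)" for f
  define power where "power f = x ^ ((\<Sum>j\<in>{1..m}. f (Inl (Suc n, j))) + f (Inr (Suc n)))" for f
  have "event \<in> borel_measurable ?PP" unfolding event_def using X_of_meas[of n n] by measurable
  moreover have "power \<in> borel_measurable ?PN"
  proof -
    have "(\<lambda>f. (\<Sum>j\<in>{1..m}. f (Inl (Suc n, j))) + f (Inr (Suc n))) \<in> measurable ?PN (count_space UNIV)"
      using measurable_nat_sum[of m "\<lambda>j f. f (Inl (Suc n, j))" ?PN]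
      by measurable (auto intro: measurable_component_singleton simp: next_gen_def)
    then show ?thesis unfolding power_def by measurable
  qed
  ultimately have "indep_var borel (event \<circ> (\<lambda>\<omega>. restrict (\<lambda>i. family i \<omega>) (past n)))
                      borel (power \<circ> (\<lambda>\<omega>. restrict (\<lambda>i. family i \<omega>) (next_gen n m)))"
    by (rule indep_var_compose[OF indep_past_next_gen])
  moreover have "event \<circ> (\<lambda>\<omega>. restrict (\<lambda>i. family i \<omega>) (past n)) = (\<lambda>\<omega>. if X n \<omega> = m then 1 else 0)"
    using X_of_restrict[of n n] by (auto simp: event_def)
  moreover have "power \<circ> (\<lambda>\<omega>. restrict (\<lambda>i. family i \<omega>) (next_gen n m)) = step_power x n m"
    by (auto simp: power_def step_power_def next_gen_def family_def fun_eq_iff intro!: sum.cong)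
  ultimately have ind: "indep_var borel (\<lambda>\<omega>. if X n \<omega> = m then 1 else 0 :: real) borel (step_power x n m)"
    by simp
  have int_event: "integrable M (\<lambda>\<omega>. if X n \<omega> = m then 1 else 0 :: real)"
    using X_meas[of n] by (intro integrable_const_bound[where B=1]) auto
  have int_power: "integrable M (step_power x n m)"
    using step_power_meas x by (intro integrable_const_bound[where B=1]) (auto simp: step_power_def power_le_one)
  have "(\<integral>\<omega>. (if X n \<omega> = m then step_power x n m \<omega> else 0) \<partial>M)
      = (\<integral>\<omega>. (if X n \<omega> = m then 1 else 0) * step_power x n m \<omega> \<partial>M)"
    by (rule Bochner_Integration.integral_cong) auto
  also have "\<dots> = (\<integral>\<omega>. (if X n \<omega> = m then 1 else 0) \<partial>M) * (\<integral>\<omega>. step_power x n m \<omega> \<partial>M)"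
    by (rule indep_var_lebesgue_integral[OF ind int_event int_power])
  finally show ?thesis using integral_indicator_value[OF X_meas, of n m 1] by simp
qed

text \<open>The fundamental recursion \<open>F\<^sub>n\<^sub>+\<^sub>1(x) = F\<^sub>n(G\<^sub>n\<^sub>+\<^sub>1(x)) H\<^sub>n\<^sub>+\<^sub>1(x)\<close>: condition on \<open>X\<^sub>n\<close>.\<close>

theorem F_Suc:
  assumes x: "0 \<le> x" "x \<le> 1"
  shows "F (Suc n) x = F n (G (Suc n) x) * H (Suc n) x"
proof -
  have "(\<lambda>m. \<integral>\<omega>. (if X n \<omega> = m then step_power x n m \<omega> else 0) \<partial>M) sums (\<integral>\<omega>. step_power x n (X n \<omega>) \<omega> \<partial>M)"
    using x by (intro expectation_sums_over_values X_meas step_power_meas) (auto simp: step_power_def power_le_one)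
  moreover have "(\<integral>\<omega>. step_power x n (X n \<omega>) \<omega> \<partial>M) = F (Suc n) x" by (simp add: F_def step_power_def)
  ultimately have s1: "(\<lambda>m. prob {\<omega>\<in>space M. X n \<omega> = m} * ((G (Suc n) x)^m * H (Suc n) x)) sums F (Suc n) x"
    by (simp only: integral_step_power_on_event[OF x] integral_step_power[OF x])
  have "0 \<le> G (Suc n) x" "G (Suc n) x \<le> 1"
    using pgf_range(2,3)[OF meas_xi x, of "Suc n" 1] by (auto simp: G_def)
  then have "(\<lambda>m. prob {\<omega>\<in>space M. X n \<omega> = m} * (G (Suc n) x)^m * H (Suc n) x) sums (F n (G (Suc n) x) * H (Suc n) x)"
    unfolding F_def by (intro sums_mult2 pgf_sums X_meas)
  with s1 show ?thesis by (simp add: mult.assoc sums_unique2)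
qed

end

text \<open>Hypotheses (i)-(iv) of the theorem.  Only the factorial moments of order at most 3 of
  the offspring laws enter the argument.\<close>

locale near_critical_bp = branching_immigration +
  fixes \<nu> lam :: real
  assumes G_fin: "\<And>n s. n \<ge> 1 \<Longrightarrow> s \<in> {1, 2, 3} \<Longrightarrow> fact_moment_finite M (\<xi> n 1) s"
    and H_fin: "\<And>n k. n \<ge> 1 \<Longrightarrow> k \<in> {1, 2} \<Longrightarrow> fact_moment_finite M (\<epsilon> n) k"
    and rho_lt1: "\<And>n. n \<ge> 1 \<Longrightarrow> fact_moment M (\<xi> n 1) 1 < 1"
    and rho_lim: "(\<lambda>n. fact_moment M (\<xi> (Suc n) 1) 1) \<longlonglongrightarrow> 1"
    and rho_div: "\<not> summable (\<lambda>n. 1 - fact_moment M (\<xi> (Suc n) 1) 1)"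
    and nu_pos: "0 < \<nu>"
    and G2_lim: "(\<lambda>n. fact_moment M (\<xi> (Suc n) 1) 2 / (1 - fact_moment M (\<xi> (Suc n) 1) 1)) \<longlonglongrightarrow> \<nu>"
    and G3_lim: "(\<lambda>n. fact_moment M (\<xi> (Suc n) 1) 3 / (1 - fact_moment M (\<xi> (Suc n) 1) 1)) \<longlonglongrightarrow> 0"
    and m1_lim: "(\<lambda>n. fact_moment M (\<epsilon> (Suc n)) 1 / (1 - fact_moment M (\<xi> (Suc n) 1) 1)) \<longlonglongrightarrow> lam"
    and m2_lim: "(\<lambda>n. fact_moment M (\<epsilon> (Suc n)) 2 / (1 - fact_moment M (\<xi> (Suc n) 1) 1)) \<longlonglongrightarrow> 0"
begin

text \<open>The hypotheses are stated along \<open>n+1\<close>; this transfers them to all indices and rescales.\<close>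

lemma ratio_limit:
  assumes "(\<lambda>n. x (Suc n) / (1 - fact_moment M (\<xi> (Suc n) 1) 1)) \<longlonglongrightarrow> l" and "d \<noteq> 0"
  shows "(\<lambda>k. x k / d / (1 - fact_moment M (\<xi> k 1) 1)) \<longlonglongrightarrow> l / d"
proof -
  have "(\<lambda>n. x (Suc n) / (1 - fact_moment M (\<xi> (Suc n) 1) 1) / d) \<longlonglongrightarrow> l / d"
    using assms by (intro tendsto_divide tendsto_const)
  then show ?thesis
    using filterlim_sequentially_Suc[of "\<lambda>k. x k / d / (1 - fact_moment M (\<xi> k 1) 1)"]
    by (simp add: mult.commute)
qed

lemma lam_nonneg: "0 \<le> lam"
proof (rule tendsto_lowerbound[OF m1_lim always_eventually])
  show "\<forall>n. 0 \<le> fact_moment M (\<epsilon> (Suc n)) 1 / (1 - fact_moment M (\<xi> (Suc n) 1) 1)"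
    using rho_lt1 by (auto simp: fact_moment_def intro!: divide_nonneg_pos integral_nonneg_AE)
qed simp

lemma offspring_pgf_bounds:
  assumes k: "k \<ge> 1" and u: "0 \<le> u" "u \<le> 1"
  defines "g \<equiv> 1 - G k (1 - u)"
  shows "0 \<le> g" "g \<le> fact_moment M (\<xi> k 1) 1 * u"
    "fact_moment M (\<xi> k 1) 1 * u - fact_moment M (\<xi> k 1) 2 / 2 * u^2 \<le> g"
    "g \<le> fact_moment M (\<xi> k 1) 1 * u - fact_moment M (\<xi> k 1) 2 / 2 * u^2 + fact_moment M (\<xi> k 1) 3 / 6 * u^3"
  using pgf_taylor_bounds[OF meas_xi[OF k] u] pgf_taylor_cubic[OF meas_xi[OF k] u] G_fin[OF k]
  by (simp_all add: g_def G_def)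

lemma immigration_pgf_bounds:
  assumes k: "k \<ge> 1" and v: "0 \<le> v" "v \<le> 1"
  shows "0 \<le> H k (1 - v)" "H k (1 - v) \<le> 1" "1 - fact_moment M (\<epsilon> k) 1 * v \<le> H k (1 - v)"
    "H k (1 - v) \<le> 1 - fact_moment M (\<epsilon> k) 1 * v + fact_moment M (\<epsilon> k) 2 / 2 * v^2"
  using pgf_taylor_bounds[OF meas_eps[OF k] v] H_fin[OF k] pgf_range(2,3)[OF meas_eps[OF k], of "1 - v"] v
  by (simp_all add: H_def)

sublocale pgf_iteration "\<lambda>k. fact_moment M (\<xi> k 1) 1" "\<lambda>k. fact_moment M (\<xi> k 1) 2 / 2"
  "\<lambda>k. fact_moment M (\<xi> k 1) 3 / 6" "\<lambda>k. fact_moment M (\<epsilon> k) 1" "\<lambda>k. fact_moment M (\<epsilon> k) 2 / 2"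
  "\<lambda>k u. 1 - G k (1 - u)" "\<lambda>k v. H k (1 - v)" "\<nu> / 2" lam
proof unfold_locales
  show "0 \<le> fact_moment M (\<xi> k 1) 1" "0 \<le> fact_moment M (\<epsilon> k) 1" for k
    by (auto simp: fact_moment_def intro!: integral_nonneg_AE)
  show "0 \<le> fact_moment M (\<xi> k 1) 3 / 6" for k
    using falling_fact_3_nonneg by (auto simp: fact_moment_def intro!: integral_nonneg_AE)
  show "(\<lambda>k. fact_moment M (\<xi> k 1) 2 / 2 / (1 - fact_moment M (\<xi> k 1) 1)) \<longlonglongrightarrow> \<nu> / 2"
    using ratio_limit[OF G2_lim, of 2] by simp
  show "(\<lambda>k. fact_moment M (\<xi> k 1) 3 / 6 / (1 - fact_moment M (\<xi> k 1) 1)) \<longlonglongrightarrow> 0"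
    using ratio_limit[OF G3_lim, of 6] by simp
  show "(\<lambda>k. fact_moment M (\<epsilon> k) 2 / 2 / (1 - fact_moment M (\<xi> k 1) 1)) \<longlonglongrightarrow> 0"
    using ratio_limit[OF m2_lim, of 2] by simp
  show "(\<lambda>k. fact_moment M (\<epsilon> k) 1 / (1 - fact_moment M (\<xi> k 1) 1)) \<longlonglongrightarrow> lam"
    using ratio_limit[OF m1_lim, of 1] by simp
  show "(\<lambda>k. fact_moment M (\<xi> k 1) 1) \<longlonglongrightarrow> 1"
    using rho_lim filterlim_sequentially_Suc[of "\<lambda>k. fact_moment M (\<xi> k 1) 1"] by simp
  show "\<not> summable (\<lambda>k. 1 - fact_moment M (\<xi> k 1) 1)"
    using rho_div summable_Suc_iff[of "\<lambda>k. 1 - fact_moment M (\<xi> k 1) 1"] by simp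
qed (use rho_lt1 offspring_pgf_bounds immigration_pgf_bounds nu_pos lam_nonneg in auto)

lemma F_eq_Phi: "0 \<le> u \<Longrightarrow> u \<le> 1 \<Longrightarrow> F n (1 - u) = Phi u n"
proof (induction n arbitrary: u)
  case 0
  then show ?case by (simp add: F_def Phi_def prob_space)
next
  case (Suc n)
  define u' where "u' = 1 - G (Suc n) (1 - u)"
  have "u' = bcomp (\<lambda>k u. 1 - G k (1 - u)) n (Suc n) u" by (simp add: u'_def bcomp_self)
  then have u': "0 \<le> u'" "u' \<le> 1" using bcomp_range[of u n "Suc n"] Suc.prems by auto
  have "F (Suc n) (1 - u) = F n (1 - u') * H (Suc n) (1 - u)"
    using F_Suc[of "1 - u" n] Suc.prems by (simp add: u'_def)
  also have "F n (1 - u') = Phi u' n" using Suc.IH u' by simp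
  also have "Phi u' n * H (Suc n) (1 - u) = Phi u (Suc n)"
  proof -
    have "{1..Suc n} = insert (Suc n) {1..n}" by auto
    moreover have "bcomp (\<lambda>k u. 1 - G k (1 - u)) k (Suc n) u = bcomp (\<lambda>k u. 1 - G k (1 - u)) k n u'"
      if "k \<le> n" for k
      using that by (simp add: u'_def)
    ultimately show ?thesis by (simp add: Phi_def bcomp_self mult.commute)
  qed
  finally show ?case .
qed

lemma nb_parameters: "2 * lam / \<nu> = lam / (\<nu> / 2)" "\<nu> / (2 + \<nu>) = \<nu> / 2 / (1 + \<nu> / 2)"
  using nu_pos by (simp_all add: field_simps)

lemma nb_parameters_range: "0 \<le> 2 * lam / \<nu>" "0 \<le> \<nu> / (2 + \<nu>)" "\<nu> / (2 + \<nu>) < 1"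
  using nu_pos lam_nonneg by simp_all

lemma pgf_X_tendsto:
  assumes x: "0 \<le> x" "x < 1"
  shows "(\<lambda>n. \<Sum>k. prob {\<omega> \<in> space M. X n \<omega> = k} * x^k)
           \<longlonglongrightarrow> (\<Sum>k. nb_prob (2 * lam / \<nu>) (\<nu> / (2 + \<nu>)) k * x^k)"
proof -
  have pgf_X: "(\<Sum>k. prob {\<omega> \<in> space M. X n \<omega> = k} * x^k) = Phi (1 - x) n" for n
    using sums_unique[OF pgf_sums[OF X_meas, of x n]] F_eq_Phi[of "1 - x" n] x by (simp add: F_def)
  have "(\<Sum>k. nb_prob (2 * lam / \<nu>) (\<nu> / (2 + \<nu>)) k * x^k)
      = (1 - \<nu> / (2 + \<nu>)) powr (2 * lam / \<nu>) * (1 - \<nu> / (2 + \<nu>) * x) powr (- (2 * lam / \<nu>))"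
    using x by (intro sums_unique[symmetric] nb_pgf_sums nb_parameters_range) auto
  also have "\<dots> = exp (- (lam / (\<nu> / 2)) * ln (1 + \<nu> / 2 * (1 - x)))"
    using nu_pos x nb_parameters by (intro nb_pgf_eq) auto
  finally have pgf_NB: "(\<Sum>k. nb_prob (2 * lam / \<nu>) (\<nu> / (2 + \<nu>)) k * x^k)
      = exp (- (lam / (\<nu> / 2)) * ln (1 + \<nu> / 2 * (1 - x)))" .
  show ?thesis unfolding pgf_X pgf_NB using Phi_tendsto[of "1 - x"] x by simp
qed

lemma point_probs_tendsto:
  "(\<lambda>n. prob {\<omega> \<in> space M. X n \<omega> = k}) \<longlonglongrightarrow> nb_prob (2 * lam / \<nu>) (\<nu> / (2 + \<nu>)) k"
proof (rule pgf_continuity[OF _ _ _ _ _ _ pgf_X_tendsto])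
  have "(\<lambda>k. prob {\<omega> \<in> space M. X n \<omega> = k}) sums 1" for n
    using pgf_sums[OF X_meas, of 1 n] by (simp add: prob_space)
  then show "summable (\<lambda>k. prob {\<omega> \<in> space M. X n \<omega> = k})"
    "suminf (\<lambda>k. prob {\<omega> \<in> space M. X n \<omega> = k}) \<le> 1" for n
    by (simp_all add: sums_iff)
  have "nb_prob (2 * lam / \<nu>) (\<nu> / (2 + \<nu>)) sums 1"
    using nb_prob_sums_1[OF nb_parameters_range] .
  then show "summable (nb_prob (2 * lam / \<nu>) (\<nu> / (2 + \<nu>)))"
    "suminf (nb_prob (2 * lam / \<nu>) (\<nu> / (2 + \<nu>))) \<le> 1"
    by (simp_all add: sums_iff)
  show "0 \<le> nb_prob (2 * lam / \<nu>) (\<nu> / (2 + \<nu>)) i" for i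
    using nb_parameters_range by (simp add: nb_prob_nonneg)
qed simp_all

theorem X_weak_convergence:
  "weak_conv_m (\<lambda>n. distr M borel (\<lambda>\<omega>. real (X n \<omega>))) (nb_measure (2 * lam / \<nu>) (\<nu> / (2 + \<nu>)))"
  unfolding nb_measure_def using nb_parameters_range
  by (intro weak_conv_of_point_probs X_meas point_probs_tendsto nb_prob_nonneg) auto

end

theorem theorem5:
  fixes M :: "'a measure"
    and \<xi> :: "nat \<Rightarrow> nat \<Rightarrow> 'a \<Rightarrow> nat"
    and \<epsilon> :: "nat \<Rightarrow> 'a \<Rightarrow> nat"
    and \<nu> lam :: real
  assumes P: "prob_space M"
    and meas_xi: "\<And>n j. n \<ge> 1 \<Longrightarrow> j \<ge> 1 \<Longrightarrow> \<xi> n j \<in> measurable M (count_space UNIV)"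
    and meas_eps: "\<And>n. n \<ge> 1 \<Longrightarrow> \<epsilon> n \<in> measurable M (count_space UNIV)"
    and indep: "prob_space.indep_vars M (\<lambda>_. count_space UNIV)
                  (\<lambda>i. case i of Inl (n, j) \<Rightarrow> \<xi> n j | Inr n \<Rightarrow> \<epsilon> n)
                  ({Inl (n, j) | n j. n \<ge> 1 \<and> j \<ge> 1} \<union> {Inr n | n. n \<ge> 1})"
    and ident: "\<And>n j. n \<ge> 1 \<Longrightarrow> j \<ge> 1 \<Longrightarrow>
                  distr M (count_space UNIV) (\<xi> n j) = distr M (count_space UNIV) (\<xi> n 1)"
    and G_fin: "\<And>n s. n \<ge> 1 \<Longrightarrow> s \<ge> 1 \<Longrightarrow> fact_moment_finite M (\<xi> n 1) s"
    and H_fin: "\<And>n k. n \<ge> 1 \<Longrightarrow> k \<in> {1, 2} \<Longrightarrow> fact_moment_finite M (\<epsilon> n) k"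
    and rho_lt1: "\<And>n. n \<ge> 1 \<Longrightarrow> fact_moment M (\<xi> n 1) 1 < 1"
    and rho_lim: "(\<lambda>n. fact_moment M (\<xi> (Suc n) 1) 1) \<longlonglongrightarrow> 1"
    and rho_div: "\<not> summable (\<lambda>n. 1 - fact_moment M (\<xi> (Suc n) 1) 1)"
    and nu_pos: "0 < \<nu>"
    and G2_lim: "(\<lambda>n. fact_moment M (\<xi> (Suc n) 1) 2 / (1 - fact_moment M (\<xi> (Suc n) 1) 1))
                   \<longlonglongrightarrow> \<nu>"
    and Gs_lim: "\<And>s. s \<ge> 3 \<Longrightarrow>
                   (\<lambda>n. fact_moment M (\<xi> (Suc n) 1) s / (1 - fact_moment M (\<xi> (Suc n) 1) 1))
                   \<longlonglongrightarrow> 0"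
    and m1_lim: "(\<lambda>n. fact_moment M (\<epsilon> (Suc n)) 1 / (1 - fact_moment M (\<xi> (Suc n) 1) 1))
                   \<longlonglongrightarrow> lam"
    and m2_lim: "(\<lambda>n. fact_moment M (\<epsilon> (Suc n)) 2 / (1 - fact_moment M (\<xi> (Suc n) 1) 1))
                   \<longlonglongrightarrow> 0"
  shows "weak_conv_m (\<lambda>n. distr M borel (\<lambda>\<omega>. real (bp_X \<xi> \<epsilon> n \<omega>)))
           (nb_measure (2 * lam / \<nu>) (\<nu> / (2 + \<nu>)))"
proof -
  have G_fin_3: "\<And>n s. n \<ge> 1 \<Longrightarrow> s \<in> {1, 2, 3} \<Longrightarrow> fact_moment_finite M (\<xi> n 1) s"
    using G_fin by auto
  have G3_lim: "(\<lambda>n. fact_moment M (\<xi> (Suc n) 1) 3 / (1 - fact_moment M (\<xi> (Suc n) 1) 1)) \<longlonglongrightarrow> 0"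
    using Gs_lim[of 3] by simp
  interpret prob_space M by (rule P)
  interpret near_critical_bp M \<xi> \<epsilon> \<nu> lam
    by unfold_locales (fact meas_xi meas_eps indep ident G_fin_3 H_fin rho_lt1 rho_lim rho_div nu_pos
        G2_lim G3_lim m1_lim m2_lim)+
  show ?thesis by (rule X_weak_convergence)
qed

end
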